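(* Let $r\in(0,\infty)$ and $C\in\mathbb R$. Then there exist, for each $K$, a positive definite $\operatorname{var}(W^K)$ and coefficient vectors $\pi^K,\gamma^K\in\mathbb R^K$ such that, with $S$ and $d_1,d_2$ satisfying (S) and (L), assumption (P) holds and $\delta_{\text{resid}}(S)\xrightarrow{p}C$ as $K\to\infty$.
   Context: For each $K$, let $W^K=(W_1^K,\dots,W_K^K)$ be a random vector, $X=\sum_i\pi_i^KW_i^K+\xi$ with $\operatorname{cov}(\xi,W^K)=0$, and $\gamma^K\in\mathbb R^K$. $S\in\{0,1\}^K$ is random and independent of everything else; $W_1(S),W_2(S)$ are the subvectors of $W^K$ with $S_i=1$, $S_i=0$, and $\pi_l(S),\gamma_l(S)$ the corresponding subvectors of $\pi^K,\gamma^K$; $d_1=\sum_iS_i$, $d_2=K-d_1$. For random vectors $A,B$, $A^{\perp B}=A-\operatorname{cov}(A,B)\operatorname{var}(B)^{-1}B$ and $\mathbb L(A\mid1,B)$ the linear projection of $A$ on $(1,B)$. Define $$\delta_{\text{resid}}(S)=\frac{\operatorname{cov}(X,\gamma_2(S)'W_2(S)^{\perp W_1(S)})}{\operatorname{var}(\gamma_2(S)'W_2(S)^{\perp W_1(S)})}\Big/\frac{\operatorname{cov}(X,\gamma_1(S)'W_1(S)+\gamma_2(S)'\mathbb L(W_2(S)\mid1,W_1(S)))}{\operatorname{var}(\gamma_1(S)'W_1(S)+\gamma_2(S)'\mathbb L(W_2(S)\mid1,W_1(S)))}.$$ (S) $S$ is uniform over vectors in $\{0,1\}^K$ with exactly $d_1$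 ones. (L) $d_1,K\to\infty$ with $d_2/d_1\to r$. (P): (P1) there are $0<\epsilon\le M<\infty$ with $\epsilon\le\operatorname{var}(\sum_i\pi_i^KW_i^K)\le M$ for all $K$; (P2) $\operatorname{var}_S(\sum_{i,j}S_iS_j\operatorname{cov}(\pi_i^KW_i^K,\pi_j^KW_j^K))\to0$ and the same with $S_i,S_j$ replaced by $1-S_i,1-S_j$; (P3) $\sum_i\operatorname{var}(\pi_i^KW_i^K)/\operatorname{var}(\sum_i\pi_i^KW_i^K)$ converges to a finite limit. *)

theory Defs
  imports "HOL-Probability.Probability" "Jordan_Normal_Form.Determinant" "Jordan_Normal_Form.DL_Submatrix"
begin

text \<open>For each K the random vector W^K enters only through
  its covariance matrix Sig = var(W^K) (a K x K real matrix). A linear combination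
  c' W (c a K-vector) has cov(c' W, d' W) = c' Sig d, and since cov(xi, W) = 0 and
  X = pi' W + xi we have cov(X, c' W) = pi' Sig c.\<close>

definition pos_def_mat :: "real mat \<Rightarrow> nat \<Rightarrow> bool" where
  "pos_def_mat A K \<longleftrightarrow> A \<in> carrier_mat K K \<and> transpose_mat A = A \<and>
     (\<forall>x \<in> carrier_vec K. x \<noteq> 0\<^sub>v K \<longrightarrow> x \<bullet> (A *\<^sub>v x) > 0)"

text \<open>Selection matrix: rows are the unit vectors e_i for i in T, i < K, in increasing
  order; so sel K T *v W is the subvector of W indexed by T.\<close>
definition sel :: "nat \<Rightarrow> nat set \<Rightarrow> real mat" where
  "sel K T = submatrix (1\<^sub>m K) T UNIV"

definition minv :: "real mat \<Rightarrow> real mat" where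
  "minv A = (1 / det A) \<cdot>\<^sub>m adj_mat A"

text \<open>delta_resid(S) for the selection set T = {i. S_i = 1}. With W1 = P1 W, W2 = P2 W:
  var(W1) = P1 Sig P1', cov(W2,W1) = P2 Sig P1'.
  gamma2' W2^{perp W1} = a' W with a = (P2 - cov(W2,W1) var(W1)^-1 P1)' gamma2;
  gamma1' W1 + gamma2' L(W2|1,W1) = b' W + const with
  b = P1' gamma1 + (cov(W2,W1) var(W1)^-1 P1)' gamma2 (constants do not affect cov/var).\<close>
definition delta_resid :: "real mat \<Rightarrow> real vec \<Rightarrow> real vec \<Rightarrow> nat set \<Rightarrow> real" where
  "delta_resid Sig p g T =
    (let K = dim_row Sig;
         P1 = sel K T; P2 = sel K (- T);
         S11 = P1 * Sig * transpose_mat P1;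
         S21 = P2 * Sig * transpose_mat P1;
         g1 = P1 *\<^sub>v g; g2 = P2 *\<^sub>v g;
         B = S21 * minv S11 * P1;
         a = transpose_mat (P2 - B) *\<^sub>v g2;
         b = transpose_mat P1 *\<^sub>v g1 + transpose_mat B *\<^sub>v g2
     in (p \<bullet> (Sig *\<^sub>v a) / (a \<bullet> (Sig *\<^sub>v a))) / (p \<bullet> (Sig *\<^sub>v b) / (b \<bullet> (Sig *\<^sub>v b))))"

definition S_dist :: "nat \<Rightarrow> nat \<Rightarrow> nat set pmf" where
  "S_dist K d1 = pmf_of_set {T. T \<subseteq> {..<K} \<and> card T = d1}"

definition block_var :: "real mat \<Rightarrow> real vec \<Rightarrow> nat set \<Rightarrow> real" where
  "block_var Sig p T = (\<Sum>i\<in>T. \<Sum>j\<in>T. p $ i * p $ j * Sig $$ (i, j))"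

end

theory Submission
  imports Defs
begin

text \<open>Take \<open>\<Sigma> = I + (1/K) 1 1'\<close>, \<open>\<pi>\<^sub>i = (a + m (-1)\<^sup>i) / \<surd>K\<close> and
  \<open>\<gamma>\<^sub>i = 1 + l (-1)\<^sup>i\<close>. For an equicorrelated covariance the residual-based ratio is an
  explicit rational function of a few partial sums over \<open>T\<close> and its complement; after rescaling
  it depends only on \<open>|T|/K\<close> and on the normalised signed counts \<open>(\<Sum>i\<in>T. (-1)\<^sup>i) / K\<close>
  of \<open>T\<close> and of its complement. Under uniform sampling the signed count of \<open>T\<close> has second moment at
  most \<open>K\<close>, so by Chebyshev the normalised signed counts tend to \<open>0\<close> in probability and the
  ratio tends to its value at \<open>(1/(1+r), 0, 0)\<close>. That value is a linear fractional function
  of \<open>m l\<close> and can be made equal to any \<open>C\<close>. The same second-moment bound gives the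
  variance condition (P2); (P1) and (P3) are direct computations.\<close>

lemma sel_carrier: "sel K I \<in> carrier_mat (card {i. i < K \<and> i \<in> I}) K"
proof -
  have "dim_row (sel K I) = card {i. i < K \<and> i \<in> I}" "dim_col (sel K I) = K"
    unfolding sel_def dim_submatrix by auto
  then show ?thesis
    by blast
qed

lemma bij_betw_pick: "finite S \<Longrightarrow> bij_betw (pick S) {..<card S} S"
proof -
  assume fin: "finite S"
  have inj: "inj_on (pick S) {..<card S}"
  proof (rule inj_onI)
    fix i j assume "i \<in> {..<card S}" "j \<in> {..<card S}" "pick S i = pick S j"
    then show "i = j"
      using pick_mono_le[of i S j] pick_mono_le[of j S i] by (cases i j rule: linorder_cases) auto
  qed
  have "pick S ` {..<card S} \<subseteq> S"
    using pick_in_set_le by auto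
  then have "pick S ` {..<card S} = S"
    using card_image[OF inj] by (intro card_subset_eq[OF fin]) simp_all
  with inj show ?thesis
    unfolding bij_betw_def by simp
qed

lemma bij_betw_pick_below:
  "bij_betw (pick I) {..<card {i. i < K \<and> i \<in> I}} {i. i < K \<and> i \<in> I}"
proof (rule bij_betw_cong[THEN iffD1, OF _ bij_betw_pick])
  show "pick {i. i < K \<and> i \<in> I} i = pick I i" if "i \<in> {..<card {i. i < K \<and> i \<in> I}}" for i
    using that pick_reduce_set[of i K I] by simp
qed simp

lemma pick_below:
  assumes "i < card {i. i < K \<and> i \<in> I}"
  shows "pick I i < K" "pick I i \<in> I"
  using bij_betw_apply[OF bij_betw_pick_below] assms by auto

lemma pick_below_eq_iff:
  assumes "i < card {i. i < K \<and> i \<in> I}" "j < card {i. i < K \<and> i \<in> I}"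
  shows "pick I i = pick I j \<longleftrightarrow> i = j"
  using bij_betw_imp_inj_on[OF bij_betw_pick_below] assms by (auto dest: inj_onD)

lemma sum_pick_below:
  "(\<Sum>i<card {i. i < K \<and> i \<in> I}. h (pick I i)) = (\<Sum>k | k < K \<and> k \<in> I. h k)"
  using sum.reindex_bij_betw[OF bij_betw_pick_below] .

lemma sel_index:
  assumes "i < card {i. i < K \<and> i \<in> I}" "k < K"
  shows "sel K I $$ (i, k) = (if pick I i = k then 1 else 0)"
  unfolding sel_def using assms pick_below(1)[OF assms(1)]
  by (simp add: submatrix_index pick_UNIV)

lemma row_sel_scalar_prod:
  assumes "i < card {i. i < K \<and> i \<in> I}" "x \<in> carrier_vec K"
  shows "row (sel K I) i \<bullet> x = x $ pick I i"
proof -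
  have "row (sel K I) i \<bullet> x = (\<Sum>k<K. if pick I i = k then x $ k else 0)"
    unfolding scalar_prod_def using assms sel_carrier[of K I] sel_index[OF assms(1)]
    by (intro sum.cong) (auto simp: lessThan_atLeast0)
  also have "\<dots> = x $ pick I i"
    using pick_below(1)[OF assms(1)] by simp
  finally show ?thesis .
qed

lemma sel_mult_vec:
  assumes "x \<in> carrier_vec K"
  shows "sel K I *\<^sub>v x = vec (card {i. i < K \<and> i \<in> I}) (\<lambda>i. x $ pick I i)"
  using assms row_sel_scalar_prod sel_carrier[of K I] by (auto simp: mult_mat_vec_def)

lemma transpose_sel_mult_vec:
  "transpose_mat (sel K I) *\<^sub>v vec (card {i. i < K \<and> i \<in> I}) (\<lambda>i. h (pick I i))
     = vec K (\<lambda>k. if k \<in> I then h k else 0)"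
proof (rule eq_vecI)
  fix k assume "k < dim_vec (vec K (\<lambda>k. if k \<in> I then h k else 0))"
  then have k: "k < K" by simp
  let ?n = "card {i. i < K \<and> i \<in> I}"
  have "(transpose_mat (sel K I) *\<^sub>v vec ?n (\<lambda>i. h (pick I i))) $ k
      = col (sel K I) k \<bullet> vec ?n (\<lambda>i. h (pick I i))"
    using k sel_carrier[of K I] by simp
  also have "\<dots> = (\<Sum>i<?n. if pick I i = k then h (pick I i) else 0)"
    using k sel_carrier[of K I] sel_index unfolding scalar_prod_def
    by (intro sum.cong) (auto simp: lessThan_atLeast0)
  also have "\<dots> = (\<Sum>j | j < K \<and> j \<in> I. if j = k then h j else 0)"
    by (rule sum_pick_below)
  also have "\<dots> = (if k \<in> I then h k else 0)"
    using k by (simp add: sum.delta)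
  finally show "(transpose_mat (sel K I) *\<^sub>v vec ?n (\<lambda>i. h (pick I i))) $ k
      = vec K (\<lambda>k. if k \<in> I then h k else 0) $ k"
    using k by simp
qed (use sel_carrier[of K I] in simp)

lemma sel_mult_mat:
  assumes "A \<in> carrier_mat K m"
  shows "sel K I * A = mat (card {i. i < K \<and> i \<in> I}) m (\<lambda>(i, k). A $$ (pick I i, k))"
  using assms sel_carrier[of K I] row_sel_scalar_prod pick_below(1)
  by (intro eq_matI) auto

lemma sel_mult_transpose_sel:
  assumes "A \<in> carrier_mat K K"
  shows "sel K I * A * transpose_mat (sel K J) = submatrix A I J"
proof (rule eq_matI)
  let ?R = "sel K I * A"
  fix i j assume "i < dim_row (submatrix A I J)" "j < dim_col (submatrix A I J)"
  then have ij: "i < card {i. i < K \<and> i \<in> I}" "j < card {i. i < K \<and> i \<in> J}"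
    using assms by (simp_all add: dim_submatrix)
  have R: "?R \<in> carrier_mat (card {i. i < K \<and> i \<in> I}) K"
    using assms sel_carrier[of K I] by simp
  have "(?R * transpose_mat (sel K J)) $$ (i, j) = row ?R i \<bullet> row (sel K J) j"
    using ij carrier_matD[OF R] carrier_matD[OF sel_carrier[of K J]]
    by (simp add: index_mult_mat)
  also have "\<dots> = row (sel K J) j \<bullet> row ?R i"
    using ij R sel_carrier[of K J] by (intro comm_scalar_prod[of _ K]) auto
  also have "\<dots> = A $$ (pick I i, pick J j)"
    using ij R assms pick_below(1)[OF ij(2)] by (simp add: row_sel_scalar_prod sel_mult_mat)
  finally show "(?R * transpose_mat (sel K J)) $$ (i, j) = submatrix A I J $$ (i, j)"
    using ij assms by (simp add: submatrix_index)
qed (use assms sel_carrier[of K I] sel_carrier[of K J] in \<open>auto simp: dim_submatrix\<close>)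

section \<open>Equicorrelated covariance matrices\<close>

definition equicorr_mat :: "nat \<Rightarrow> real \<Rightarrow> real mat" where
  "equicorr_mat n \<rho> = mat n n (\<lambda>(i, j). (if i = j then 1 else 0) + \<rho>)"

lemma equicorr_mat_carrier [simp]: "equicorr_mat n \<rho> \<in> carrier_mat n n"
  and dim_equicorr_mat [simp]: "dim_row (equicorr_mat n \<rho>) = n" "dim_col (equicorr_mat n \<rho>) = n"
  by (simp_all add: equicorr_mat_def)

lemma scalar_prod_col_equicorr:
  assumes "x \<in> carrier_vec n" "j < n"
  shows "x \<bullet> col (equicorr_mat n \<rho>) j = x $ j + \<rho> * (\<Sum>i<n. x $ i)"
proof -
  have "x \<bullet> col (equicorr_mat n \<rho>) j = (\<Sum>i<n. (if i = j then x $ i else 0) + \<rho> * x $ i)"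
    using assms unfolding scalar_prod_def equicorr_mat_def
    by (intro sum.cong) (auto simp: lessThan_atLeast0 algebra_simps)
  also have "\<dots> = x $ j + \<rho> * (\<Sum>i<n. x $ i)"
    using assms(2) by (simp add: sum.distrib sum_distrib_left)
  finally show ?thesis .
qed

lemma equicorr_mult_vec:
  assumes "x \<in> carrier_vec n"
  shows "equicorr_mat n \<rho> *\<^sub>v x = vec n (\<lambda>i. x $ i + \<rho> * (\<Sum>j<n. x $ j))"
proof (rule eq_vecI)
  fix i assume "i < dim_vec (vec n (\<lambda>i. x $ i + \<rho> * (\<Sum>j<n. x $ j)))"
  then have i: "i < n" by simp
  have "(equicorr_mat n \<rho> *\<^sub>v x) $ i = row (equicorr_mat n \<rho>) i \<bullet> x"
    using i by simp
  also have "\<dots> = x \<bullet> col (equicorr_mat n \<rho>) i"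
  proof -
    have "row (equicorr_mat n \<rho>) i = col (equicorr_mat n \<rho>) i"
      using i by (auto simp: equicorr_mat_def)
    then show ?thesis
      using assms row_carrier[of "equicorr_mat n \<rho>" i] by (simp add: comm_scalar_prod[of _ n])
  qed
  finally show "(equicorr_mat n \<rho> *\<^sub>v x) $ i = vec n (\<lambda>i. x $ i + \<rho> * (\<Sum>j<n. x $ j)) $ i"
    using i scalar_prod_col_equicorr[OF assms i] by simp
qed simp

lemma equicorr_bilinear:
  assumes "x \<in> carrier_vec n" "y \<in> carrier_vec n"
  shows "x \<bullet> (equicorr_mat n \<rho> *\<^sub>v y)
    = (\<Sum>i<n. x $ i * y $ i) + \<rho> * (\<Sum>i<n. x $ i) * (\<Sum>i<n. y $ i)"
  using assms unfolding equicorr_mult_vec[OF assms(2)] scalar_prod_def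
  by (simp add: lessThan_atLeast0 algebra_simps sum.distrib sum_distrib_left)

lemma equicorr_pos_def:
  assumes "\<rho> \<ge> 0"
  shows "pos_def_mat (equicorr_mat n \<rho>) n"
  unfolding pos_def_mat_def
proof (intro conjI ballI impI)
  show "transpose_mat (equicorr_mat n \<rho>) = equicorr_mat n \<rho>"
    by (intro eq_matI) (auto simp: equicorr_mat_def)
  fix x :: "real vec" assume x: "x \<in> carrier_vec n" and nz: "x \<noteq> 0\<^sub>v n"
  have "\<exists>i<n. x $ i \<noteq> 0"
  proof (rule ccontr)
    assume "\<not> (\<exists>i<n. x $ i \<noteq> 0)"
    then have "x = 0\<^sub>v n"
      using x by (intro eq_vecI) auto
    with nz show False ..
  qed
  then obtain i where i: "i < n" "x $ i \<noteq> 0"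
    by blast
  have "0 < x $ i * x $ i"
    using i(2) not_real_square_gt_zero by blast
  then have "0 < (\<Sum>i<n. x $ i * x $ i)"
    using i by (intro sum_pos2[of "{..<n}" i]) auto
  moreover have "0 \<le> \<rho> * ((\<Sum>i<n. x $ i) * (\<Sum>i<n. x $ i))"
    using assms by simp
  ultimately show "x \<bullet> (equicorr_mat n \<rho> *\<^sub>v x) > 0"
    unfolding equicorr_bilinear[OF x x] by (simp add: mult.assoc)
qed simp

lemma submatrix_equicorr_diag:
  "submatrix (equicorr_mat K \<rho>) I I = equicorr_mat (card {i. i < K \<and> i \<in> I}) \<rho>"
  by (intro eq_matI)
    (auto simp: submatrix_index dim_submatrix equicorr_mat_def pick_below pick_below_eq_iff)

lemma submatrix_equicorr_compl:
  "submatrix (equicorr_mat K \<rho>) (- I) I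
    = mat (card {i. i < K \<and> i \<in> - I}) (card {i. i < K \<and> i \<in> I}) (\<lambda>_. \<rho>)"
proof (intro eq_matI)
  fix i j assume "i < dim_row (mat (card {i. i < K \<and> i \<in> - I}) (card {i. i < K \<and> i \<in> I}) (\<lambda>_. \<rho>))"
    "j < dim_col (mat (card {i. i < K \<and> i \<in> - I}) (card {i. i < K \<and> i \<in> I}) (\<lambda>_. \<rho>))"
  then have ij: "i < card {i. i < K \<and> i \<in> - I}" "j < card {i. i < K \<and> i \<in> I}"
    by simp_all
  then have "pick (- I) i \<noteq> pick I j"
    using pick_below(2)[OF ij(1)] pick_below(2)[OF ij(2)] by auto
  then show "submatrix (equicorr_mat K \<rho>) (- I) I $$ (i, j)
      = mat (card {i. i < K \<and> i \<in> - I}) (card {i. i < K \<and> i \<in> I}) (\<lambda>_. \<rho>) $$ (i, j)"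
    using ij pick_below(1)[OF ij(1)] pick_below(1)[OF ij(2)]
    by (simp add: submatrix_index equicorr_mat_def)
qed (simp_all add: dim_submatrix equicorr_mat_def)

lemma const_mat_mult_equicorr:
  "mat m n (\<lambda>_. c) * equicorr_mat n \<rho> = mat m n (\<lambda>_. c * (1 + \<rho> * real n))"
proof (rule eq_matI)
  fix i j assume "i < dim_row (mat m n (\<lambda>_. c * (1 + \<rho> * real n)))" "j < dim_col (mat m n (\<lambda>_. c * (1 + \<rho> * real n)))"
  then have ij: "i < m" "j < n" by simp_all
  have "row (mat m n (\<lambda>_. c)) i = vec n (\<lambda>_. c)"
    using ij by auto
  then show "(mat m n (\<lambda>_. c) * equicorr_mat n \<rho>) $$ (i, j) = mat m n (\<lambda>_. c * (1 + \<rho> * real n)) $$ (i, j)"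
    using ij scalar_prod_col_equicorr[of "vec n (\<lambda>_. c)" n j \<rho>] by (simp add: algebra_simps)
qed (simp_all add: equicorr_mat_def)

lemma minv_carrier: "A \<in> carrier_mat n n \<Longrightarrow> minv A \<in> carrier_mat n n"
  unfolding minv_def by (simp add: adj_mat(1))

lemma mult_minv:
  assumes "A \<in> carrier_mat n n" "det A \<noteq> 0"
  shows "A * minv A = 1\<^sub>m n"
proof -
  have "A * minv A = (1 / det A) \<cdot>\<^sub>m (A * adj_mat A)"
    unfolding minv_def using assms(1) by (simp add: mult_smult_distrib[OF _ adj_mat(1)])
  also have "\<dots> = 1\<^sub>m n"
    using assms by (intro eq_matI) (auto simp: adj_mat(2))
  finally show ?thesis .
qed

lemma equicorr_mult_minv:
  assumes "1 + \<rho> * real n \<noteq> 0"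
  shows "equicorr_mat n \<rho> * minv (equicorr_mat n \<rho>) = 1\<^sub>m n"
proof (rule mult_minv)
  let ?S = "equicorr_mat n \<rho>"
  define N where "N = 1\<^sub>m n - mat n n (\<lambda>_. \<rho> / (1 + \<rho> * real n))"
  have "N * ?S = 1\<^sub>m n * ?S - mat n n (\<lambda>_. \<rho> / (1 + \<rho> * real n)) * ?S"
    unfolding N_def by (rule minus_mult_distrib_mat) auto
  also have "\<dots> = ?S - mat n n (\<lambda>_. \<rho>)"
    using assms by (simp add: const_mat_mult_equicorr)
  also have "\<dots> = 1\<^sub>m n"
    by (intro eq_matI) (auto simp: equicorr_mat_def)
  finally have NS: "N * ?S = 1\<^sub>m n" .
  have "det N * det ?S = det (N * ?S)"
    unfolding N_def by (rule det_mult[symmetric]) auto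
  also have "\<dots> = 1"
    unfolding NS by simp
  finally show "det ?S \<noteq> 0"
    by auto
qed simp

section \<open>The residual-based ratio for an equicorrelated covariance\<close>

lemma sum_vec_if_split:
  assumes "T \<subseteq> {..<K}"
  shows "(\<Sum>i<K. F i (vec K (\<lambda>k. if k \<in> T then f k else h k) $ i))
    = (\<Sum>i\<in>T. F i (f i)) + (\<Sum>i\<in>{..<K} - T. F i (h i))"
proof -
  have "(\<Sum>i<K. F i (vec K (\<lambda>k. if k \<in> T then f k else h k) $ i))
      = (\<Sum>i<K. if i \<in> T then F i (f i) else F i (h i))"
    by (intro sum.cong) auto
  also have "\<dots> = (\<Sum>i\<in>T. F i (f i)) + (\<Sum>i\<in>{..<K} - T. F i (h i))"
    using assms by (simp add: sum.If_cases Int_absorb1 Diff_eq)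
  finally show ?thesis .
qed

lemma regression_matrix_equicorr:
  assumes T: "T \<subseteq> {..<K}" and \<rho>: "1 + \<rho> * real (card T) \<noteq> 0"
  shows "sel K (- T) * equicorr_mat K \<rho> * transpose_mat (sel K T)
      * minv (sel K T * equicorr_mat K \<rho> * transpose_mat (sel K T))
    = mat (card {i. i < K \<and> i \<in> - T}) (card T) (\<lambda>_. \<rho> / (1 + \<rho> * real (card T)))"
proof -
  let ?n1 = "card {i. i < K \<and> i \<in> T}" and ?n2 = "card {i. i < K \<and> i \<in> - T}"
  have n1: "?n1 = card T"
    using T by (intro arg_cong[where f = card]) auto
  define M where "M = mat ?n2 ?n1 (\<lambda>_. \<rho> / (1 + \<rho> * real ?n1))"
  let ?S11 = "equicorr_mat ?n1 \<rho>"
  have "sel K (- T) * equicorr_mat K \<rho> * transpose_mat (sel K T) = M * ?S11"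
    using \<rho> unfolding M_def
    by (simp add: sel_mult_transpose_sel submatrix_equicorr_compl const_mat_mult_equicorr n1)
  moreover have "sel K T * equicorr_mat K \<rho> * transpose_mat (sel K T) = ?S11"
    by (simp add: sel_mult_transpose_sel submatrix_equicorr_diag)
  moreover have "M * ?S11 * minv ?S11 = M * (?S11 * minv ?S11)"
    unfolding M_def by (intro assoc_mult_mat) (auto intro: minv_carrier)
  moreover have "\<dots> = M"
    using \<rho> n1 equicorr_mult_minv[of \<rho> ?n1] unfolding M_def by simp
  ultimately show ?thesis
    unfolding M_def n1 by simp
qed

lemma residual_coefficients_equicorr:
  fixes g :: "real vec"
  assumes T: "T \<subseteq> {..<K}" and \<rho>: "1 + \<rho> * real (card T) \<noteq> 0" and g: "g \<in> carrier_vec K"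
  defines "P1 \<equiv> sel K T" and "P2 \<equiv> sel K (- T)" and "S \<equiv> equicorr_mat K \<rho>"
  defines "B \<equiv> P2 * S * transpose_mat P1 * minv (P1 * S * transpose_mat P1) * P1"
  defines "\<kappa> \<equiv> \<rho> * (\<Sum>k\<in>{..<K} - T. g $ k) / (1 + \<rho> * real (card T))"
  shows "transpose_mat (P2 - B) *\<^sub>v (P2 *\<^sub>v g) = vec K (\<lambda>k. if k \<in> T then - \<kappa> else g $ k)"
    and "transpose_mat P1 *\<^sub>v (P1 *\<^sub>v g) + transpose_mat B *\<^sub>v (P2 *\<^sub>v g)
      = vec K (\<lambda>k. if k \<in> T then g $ k + \<kappa> else 0)"
proof -
  let ?n1 = "card {i. i < K \<and> i \<in> T}" and ?n2 = "card {i. i < K \<and> i \<in> - T}"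
  have n1: "?n1 = card T"
    using T by (intro arg_cong[where f = card]) auto
  have P1: "P1 \<in> carrier_mat ?n1 K" and P2: "P2 \<in> carrier_mat ?n2 K"
    unfolding P1_def P2_def by (rule sel_carrier)+
  define M where "M = mat ?n2 ?n1 (\<lambda>_. \<rho> / (1 + \<rho> * real ?n1))"
  have M: "M \<in> carrier_mat ?n2 ?n1"
    unfolding M_def by simp
  have B: "B = M * P1"
    using regression_matrix_equicorr[OF T \<rho>] unfolding B_def P1_def P2_def S_def M_def n1 by simp
  have P2g: "P2 *\<^sub>v g = vec ?n2 (\<lambda>i. g $ pick (- T) i)"
    unfolding P2_def by (rule sel_mult_vec[OF g])
  have "(\<Sum>i<?n2. g $ pick (- T) i) = (\<Sum>k | k < K \<and> k \<in> - T. g $ k)"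
    by (rule sum_pick_below)
  also have "\<dots> = (\<Sum>k\<in>{..<K} - T. g $ k)"
    by (intro sum.cong) auto
  finally have "(\<Sum>i<?n2. \<rho> / (1 + \<rho> * real ?n1) * g $ pick (- T) i) = \<kappa>"
    unfolding \<kappa>_def n1 by (simp add: sum_divide_distrib[symmetric] sum_distrib_left[symmetric])
  then have Mg: "transpose_mat M *\<^sub>v (P2 *\<^sub>v g) = vec ?n1 (\<lambda>i. (\<lambda>_. \<kappa>) (pick T i))"
    unfolding P2g M_def by (intro eq_vecI) (auto simp: scalar_prod_def atLeast0LessThan)
  have "transpose_mat B *\<^sub>v (P2 *\<^sub>v g) = transpose_mat P1 *\<^sub>v (transpose_mat M *\<^sub>v (P2 *\<^sub>v g))"
    unfolding B transpose_mult[OF M P1] using M P1 P2 g by (intro assoc_mult_mat_vec) auto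
  also have "\<dots> = vec K (\<lambda>k. if k \<in> T then \<kappa> else 0)"
    unfolding Mg P1_def by (rule transpose_sel_mult_vec)
  finally have Bg: "transpose_mat B *\<^sub>v (P2 *\<^sub>v g) = vec K (\<lambda>k. if k \<in> T then \<kappa> else 0)" .
  have "transpose_mat (P2 - B) *\<^sub>v (P2 *\<^sub>v g)
      = transpose_mat P2 *\<^sub>v (P2 *\<^sub>v g) - transpose_mat B *\<^sub>v (P2 *\<^sub>v g)"
    using P2 g M P1 unfolding B by (simp add: transpose_minus minus_mult_distrib_mat_vec[of _ K ?n2])
  also have "transpose_mat P2 *\<^sub>v (P2 *\<^sub>v g) = vec K (\<lambda>k. if k \<in> - T then g $ k else 0)"
    unfolding P2g unfolding P2_def by (rule transpose_sel_mult_vec)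
  finally show "transpose_mat (P2 - B) *\<^sub>v (P2 *\<^sub>v g) = vec K (\<lambda>k. if k \<in> T then - \<kappa> else g $ k)"
    unfolding Bg by (intro eq_vecI) auto
  have "transpose_mat P1 *\<^sub>v (P1 *\<^sub>v g) = vec K (\<lambda>k. if k \<in> T then g $ k else 0)"
    unfolding P1_def sel_mult_vec[OF g] by (rule transpose_sel_mult_vec)
  then show "transpose_mat P1 *\<^sub>v (P1 *\<^sub>v g) + transpose_mat B *\<^sub>v (P2 *\<^sub>v g)
      = vec K (\<lambda>k. if k \<in> T then g $ k + \<kappa> else 0)"
    unfolding Bg by (intro eq_vecI) auto
qed

text \<open>The arguments are \<open>d = |T|\<close>, \<open>P1 = \<Sum>i\<in>T. \<pi>\<^sub>i\<close>, \<open>P = \<Sum>i<K. \<pi>\<^sub>i\<close>, and the sums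
  \<open>G = \<Sum> \<gamma>\<^sub>i\<close>, \<open>R = \<Sum> \<pi>\<^sub>i \<gamma>\<^sub>i\<close>, \<open>Q = \<Sum> \<gamma>\<^sub>i\<^sup>2\<close> over \<open>T\<close> (index 1) and over its
  complement (index 2). The number \<open>\<kappa>\<close> is the coefficient that \<open>\<gamma>\<^sub>2' \<bbbL>(W\<^sub>2 | 1, W\<^sub>1)\<close>
  puts on every coordinate of \<open>W\<^sub>1\<close>.\<close>

definition delta_equicorr ::
    "real \<Rightarrow> real \<Rightarrow> real \<Rightarrow> real \<Rightarrow> real \<Rightarrow> real \<Rightarrow> real \<Rightarrow> real \<Rightarrow> real \<Rightarrow> real \<Rightarrow> real" where
  "delta_equicorr \<rho> d P1 P G1 G2 R1 R2 Q1 Q2 = (let \<kappa> = \<rho> * G2 / (1 + \<rho> * d) in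
     ((R2 - \<kappa> * P1 + \<rho> * P * (G2 - \<kappa> * d)) / (Q2 + \<kappa>\<^sup>2 * d + \<rho> * (G2 - \<kappa> * d)\<^sup>2)) /
     ((R1 + \<kappa> * P1 + \<rho> * P * (G1 + \<kappa> * d)) /
      (Q1 + 2 * \<kappa> * G1 + \<kappa>\<^sup>2 * d + \<rho> * (G1 + \<kappa> * d)\<^sup>2)))"

lemma equicorr_forms_residual_vectors:
  fixes p g :: "real vec" and \<kappa> \<rho> :: real
  assumes T: "T \<subseteq> {..<K}" and p: "p \<in> carrier_vec K" and g: "g \<in> carrier_vec K"
  defines "a \<equiv> vec K (\<lambda>k. if k \<in> T then - \<kappa> else g $ k)"
    and "b \<equiv> vec K (\<lambda>k. if k \<in> T then g $ k + \<kappa> else 0)"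
    and "d \<equiv> real (card T)" and "P1 \<equiv> \<Sum>i\<in>T. p $ i" and "P \<equiv> \<Sum>i<K. p $ i"
    and "G1 \<equiv> \<Sum>i\<in>T. g $ i" and "G2 \<equiv> \<Sum>i\<in>{..<K} - T. g $ i"
    and "R1 \<equiv> \<Sum>i\<in>T. p $ i * g $ i" and "R2 \<equiv> \<Sum>i\<in>{..<K} - T. p $ i * g $ i"
    and "Q1 \<equiv> \<Sum>i\<in>T. (g $ i)\<^sup>2" and "Q2 \<equiv> \<Sum>i\<in>{..<K} - T. (g $ i)\<^sup>2"
  shows "p \<bullet> (equicorr_mat K \<rho> *\<^sub>v a) = R2 - \<kappa> * P1 + \<rho> * P * (G2 - \<kappa> * d)"
    and "a \<bullet> (equicorr_mat K \<rho> *\<^sub>v a) = Q2 + \<kappa>\<^sup>2 * d + \<rho> * (G2 - \<kappa> * d)\<^sup>2"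
    and "p \<bullet> (equicorr_mat K \<rho> *\<^sub>v b) = R1 + \<kappa> * P1 + \<rho> * P * (G1 + \<kappa> * d)"
    and "b \<bullet> (equicorr_mat K \<rho> *\<^sub>v b) = Q1 + 2 * \<kappa> * G1 + \<kappa>\<^sup>2 * d + \<rho> * (G1 + \<kappa> * d)\<^sup>2"
proof -
  have a: "a \<in> carrier_vec K" and b: "b \<in> carrier_vec K"
    unfolding a_def b_def by simp_all
  note split_a = sum_vec_if_split[OF T, where f = "\<lambda>_. - \<kappa>" and h = "\<lambda>k. g $ k", folded a_def]
  note split_b = sum_vec_if_split[OF T, where f = "\<lambda>k. g $ k + \<kappa>" and h = "\<lambda>_. 0", folded b_def]
  have sum_a: "(\<Sum>i<K. a $ i) = G2 - \<kappa> * d"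
    using split_a[where F = "\<lambda>_ v. v"] unfolding G2_def d_def by simp
  have sum_b: "(\<Sum>i<K. b $ i) = G1 + \<kappa> * d"
    using split_b[where F = "\<lambda>_ v. v"] unfolding G1_def d_def by (simp add: sum.distrib)
  have "(\<Sum>i\<in>T. p $ i * - \<kappa>) = - \<kappa> * P1"
    unfolding P1_def by (simp add: sum_distrib_left mult_ac)
  then show "p \<bullet> (equicorr_mat K \<rho> *\<^sub>v a) = R2 - \<kappa> * P1 + \<rho> * P * (G2 - \<kappa> * d)"
    using split_a[where F = "\<lambda>i v. p $ i * v"]
    unfolding equicorr_bilinear[OF p a] sum_a R2_def P_def by linarith
  show "a \<bullet> (equicorr_mat K \<rho> *\<^sub>v a) = Q2 + \<kappa>\<^sup>2 * d + \<rho> * (G2 - \<kappa> * d)\<^sup>2"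
    using split_a[where F = "\<lambda>_ v. v * v"]
    unfolding equicorr_bilinear[OF a a] sum_a Q2_def d_def by (simp add: power2_eq_square)
  have "(\<Sum>i\<in>T. p $ i * (g $ i + \<kappa>)) = R1 + \<kappa> * P1"
    unfolding R1_def P1_def by (simp add: distrib_left sum.distrib sum_distrib_left mult_ac)
  then show "p \<bullet> (equicorr_mat K \<rho> *\<^sub>v b) = R1 + \<kappa> * P1 + \<rho> * P * (G1 + \<kappa> * d)"
    using split_b[where F = "\<lambda>i v. p $ i * v"]
    unfolding equicorr_bilinear[OF p b] sum_b P_def by simp
  show "b \<bullet> (equicorr_mat K \<rho> *\<^sub>v b) = Q1 + 2 * \<kappa> * G1 + \<kappa>\<^sup>2 * d + \<rho> * (G1 + \<kappa> * d)\<^sup>2"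
    using split_b[where F = "\<lambda>_ v. v * v"]
    unfolding equicorr_bilinear[OF b b] sum_b Q1_def G1_def d_def
    by (simp add: power2_eq_square algebra_simps sum.distrib sum_distrib_left)
qed

lemma delta_resid_equicorr:
  fixes p g :: "real vec"
  assumes T: "T \<subseteq> {..<K}" and \<rho>: "1 + \<rho> * real (card T) \<noteq> 0"
    and p: "p \<in> carrier_vec K" and g: "g \<in> carrier_vec K"
  shows "delta_resid (equicorr_mat K \<rho>) p g T
    = delta_equicorr \<rho> (card T) (\<Sum>i\<in>T. p $ i) (\<Sum>i<K. p $ i)
        (\<Sum>i\<in>T. g $ i) (\<Sum>i\<in>{..<K} - T. g $ i)
        (\<Sum>i\<in>T. p $ i * g $ i) (\<Sum>i\<in>{..<K} - T. p $ i * g $ i)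
        (\<Sum>i\<in>T. (g $ i)\<^sup>2) (\<Sum>i\<in>{..<K} - T. (g $ i)\<^sup>2)"
proof -
  define \<kappa> where "\<kappa> = \<rho> * (\<Sum>i\<in>{..<K} - T. g $ i) / (1 + \<rho> * real (card T))"
  define a where "a = vec K (\<lambda>k. if k \<in> T then - \<kappa> else g $ k)"
  define b where "b = vec K (\<lambda>k. if k \<in> T then g $ k + \<kappa> else 0)"
  have "delta_resid (equicorr_mat K \<rho>) p g T
      = (p \<bullet> (equicorr_mat K \<rho> *\<^sub>v a) / (a \<bullet> (equicorr_mat K \<rho> *\<^sub>v a)))
        / (p \<bullet> (equicorr_mat K \<rho> *\<^sub>v b) / (b \<bullet> (equicorr_mat K \<rho> *\<^sub>v b)))"
    using residual_coefficients_equicorr[OF T \<rho> g]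
    unfolding delta_resid_def Let_def dim_equicorr_mat a_def b_def \<kappa>_def by simp
  then show ?thesis
    unfolding a_def b_def equicorr_forms_residual_vectors[OF T p g]
    unfolding delta_equicorr_def Let_def \<kappa>_def .
qed

lemma delta_equicorr_scale:
  fixes K :: real
  assumes K: "K > 0"
  shows "delta_equicorr (1 / K) (x * K) (sqrt K * a1) (sqrt K * a2) (K * b1) (K * b2)
      (sqrt K * c1) (sqrt K * c2) (K * e1) (K * e2)
    = delta_equicorr 1 x a1 a2 b1 b2 c1 c2 e1 e2"
proof -
  define k where "k = b2 / (1 + x)"
  have k: "1 / K * (K * b2) / (1 + 1 / K * (x * K)) = k" "1 * b2 / (1 + 1 * x) = k"
    unfolding k_def using K by simp_all
  have num2: "sqrt K * c2 - k * (sqrt K * a1) + 1 / K * (sqrt K * a2) * (K * b2 - k * (x * K))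
      = sqrt K * (c2 - k * a1 + 1 * a2 * (b2 - k * x))"
    and den2: "K * e2 + k\<^sup>2 * (x * K) + 1 / K * (K * b2 - k * (x * K))\<^sup>2
      = K * (e2 + k\<^sup>2 * x + 1 * (b2 - k * x)\<^sup>2)"
    and num1: "sqrt K * c1 + k * (sqrt K * a1) + 1 / K * (sqrt K * a2) * (K * b1 + k * (x * K))
      = sqrt K * (c1 + k * a1 + 1 * a2 * (b1 + k * x))"
    and den1: "K * e1 + 2 * k * (K * b1) + k\<^sup>2 * (x * K) + 1 / K * (K * b1 + k * (x * K))\<^sup>2
      = K * (e1 + 2 * k * b1 + k\<^sup>2 * x + 1 * (b1 + k * x)\<^sup>2)"
    using K by (simp_all add: algebra_simps power2_eq_square)
  have cancel: "(sqrt K * A / (K * B)) / (sqrt K * C / (K * D)) = (A / B) / (C / D)" for A B C D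
  proof -
    have "sqrt K * A / (K * B) = (sqrt K / K) * (A / B)" "sqrt K * C / (K * D) = (sqrt K / K) * (C / D)"
      by simp_all
    moreover have "sqrt K / K \<noteq> 0"
      using K by simp
    ultimately show ?thesis
      by simp
  qed
  show ?thesis
    unfolding delta_equicorr_def Let_def k num1 num2 den1 den2 cancel ..
qed

definition alt_sign :: "nat \<Rightarrow> real" where
  "alt_sign i = (- 1) ^ i"

definition signed_count :: "nat set \<Rightarrow> real" where
  "signed_count A = (\<Sum>i\<in>A. alt_sign i)"

definition pi_alt :: "real \<Rightarrow> real \<Rightarrow> nat \<Rightarrow> real vec" where
  "pi_alt a m K = vec K (\<lambda>i. (a + m * alt_sign i) / sqrt K)"

definition gamma_alt :: "real \<Rightarrow> nat \<Rightarrow> real vec" where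
  "gamma_alt l K = vec K (\<lambda>i. 1 + l * alt_sign i)"

lemma pi_alt_carrier [simp]: "pi_alt a m K \<in> carrier_vec K"
  and gamma_alt_carrier [simp]: "gamma_alt l K \<in> carrier_vec K"
  unfolding pi_alt_def gamma_alt_def by simp_all

lemma alt_sign_sq [simp]: "(alt_sign i)\<^sup>2 = 1"
  unfolding alt_sign_def by (simp add: power_even_eq[symmetric] mult.commute power_mult[symmetric])

lemma abs_alt_sign [simp]: "\<bar>alt_sign i\<bar> = 1"
  unfolding alt_sign_def by simp

lemma signed_count_lessThan: "signed_count {..<K} = (if even K then 0 else 1)"
  unfolding signed_count_def by (induction K) (auto simp: alt_sign_def)

lemma signed_count_compl:
  assumes "T \<subseteq> {..<K}"
  shows "signed_count ({..<K} - T) = signed_count {..<K} - signed_count T"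
  unfolding signed_count_def using assms by (simp add: sum_diff)

lemma abs_signed_count_le: "finite A \<Longrightarrow> \<bar>signed_count A\<bar> \<le> card A"
  unfolding signed_count_def using sum_abs[of alt_sign A] by simp

lemma sum_affine_alt_sign:
  "(\<Sum>i\<in>A. a + b * alt_sign i) = a * card A + b * signed_count A"
  unfolding signed_count_def by (simp add: sum.distrib sum_distrib_left)

lemma sum_mult_affine_alt_sign:
  "(\<Sum>i\<in>A. (a + b * alt_sign i) * (c + d * alt_sign i))
    = (a * c + b * d) * card A + (a * d + b * c) * signed_count A"
proof -
  have "(a + b * alt_sign i) * (c + d * alt_sign i) = (a * c + b * d) + (a * d + b * c) * alt_sign i" for i
    using alt_sign_sq[of i] by (simp add: algebra_simps power2_eq_square)
  then show ?thesis
    by (simp add: sum_affine_alt_sign)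
qed

lemma partial_sums_alt:
  fixes K :: nat and A :: "nat set"
  assumes K: "K > 0" and A: "A \<subseteq> {..<K}"
  defines "c \<equiv> real (card A) / real K" and "y \<equiv> signed_count A / real K"
  shows "(\<Sum>i\<in>A. pi_alt a m K $ i) = sqrt (real K) * (a * c + m * y)"
    and "(\<Sum>i\<in>A. gamma_alt l K $ i) = real K * (c + l * y)"
    and "(\<Sum>i\<in>A. pi_alt a m K $ i * gamma_alt l K $ i)
      = sqrt (real K) * ((a + m * l) * c + (a * l + m) * y)"
    and "(\<Sum>i\<in>A. (gamma_alt l K $ i)\<^sup>2) = real K * ((1 + l\<^sup>2) * c + 2 * l * y)"
    and "(\<Sum>i\<in>A. (pi_alt a m K $ i)\<^sup>2) = (a\<^sup>2 + m\<^sup>2) * c + 2 * a * m * y"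
proof -
  have sK: "z / sqrt K = sqrt K * (z / K)" for z
    using K by (simp add: field_simps)
  have entries: "pi_alt a m K $ i = (a + m * alt_sign i) / sqrt K"
    "gamma_alt l K $ i = 1 + l * alt_sign i" if "i \<in> A" for i
    using that A unfolding pi_alt_def gamma_alt_def by auto
  have "(\<Sum>i\<in>A. pi_alt a m K $ i) = (\<Sum>i\<in>A. a + m * alt_sign i) / sqrt K"
    by (simp add: entries sum_divide_distrib)
  then show "(\<Sum>i\<in>A. pi_alt a m K $ i) = sqrt (real K) * (a * c + m * y)"
    unfolding sum_affine_alt_sign sK c_def y_def by (simp add: add_divide_distrib)
  show "(\<Sum>i\<in>A. gamma_alt l K $ i) = K * (c + l * y)"
    using K by (simp add: entries sum_affine_alt_sign c_def y_def field_simps)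
  have "(\<Sum>i\<in>A. pi_alt a m K $ i * gamma_alt l K $ i)
      = (\<Sum>i\<in>A. (a + m * alt_sign i) * (1 + l * alt_sign i)) / sqrt K"
    by (simp add: entries sum_divide_distrib)
  then show "(\<Sum>i\<in>A. pi_alt a m K $ i * gamma_alt l K $ i)
      = sqrt (real K) * ((a + m * l) * c + (a * l + m) * y)"
    unfolding sum_mult_affine_alt_sign sK c_def y_def by (simp add: algebra_simps add_divide_distrib)
  have "(\<Sum>i\<in>A. (gamma_alt l K $ i)\<^sup>2) = (\<Sum>i\<in>A. (1 + l * alt_sign i) * (1 + l * alt_sign i))"
    by (simp add: entries power2_eq_square)
  then show "(\<Sum>i\<in>A. (gamma_alt l K $ i)\<^sup>2) = K * ((1 + l\<^sup>2) * c + 2 * l * y)"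
    using K unfolding sum_mult_affine_alt_sign c_def y_def by (simp add: field_simps power2_eq_square)
  have "(\<Sum>i\<in>A. (pi_alt a m K $ i)\<^sup>2) = (\<Sum>i\<in>A. (a + m * alt_sign i) * (a + m * alt_sign i)) / K"
    using K by (simp add: entries sum_divide_distrib power_divide power2_eq_square)
  then show "(\<Sum>i\<in>A. (pi_alt a m K $ i)\<^sup>2) = (a\<^sup>2 + m\<^sup>2) * c + 2 * a * m * y"
    unfolding sum_mult_affine_alt_sign c_def y_def by (simp add: power2_eq_square add_divide_distrib)
qed

text \<open>The ratio in the coordinates \<open>x = |T|/K\<close>, \<open>y1 = signed_count T / K\<close> and
  \<open>y2 = signed_count ({..<K} - T) / K\<close>.\<close>

definition delta_scaled :: "real \<Rightarrow> real \<Rightarrow> real \<Rightarrow> real \<Rightarrow> real \<Rightarrow> real \<Rightarrow> real" where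
  "delta_scaled a m l x y1 y2 = delta_equicorr 1 x (a * x + m * y1) (a + m * (y1 + y2))
     (x + l * y1) ((1 - x) + l * y2)
     ((a + m * l) * x + (a * l + m) * y1) ((a + m * l) * (1 - x) + (a * l + m) * y2)
     ((1 + l\<^sup>2) * x + 2 * l * y1) ((1 + l\<^sup>2) * (1 - x) + 2 * l * y2)"

lemma delta_resid_alt:
  assumes K: "K > 0" and T: "T \<subseteq> {..<K}"
  shows "delta_resid (equicorr_mat K (1 / K)) (pi_alt a m K) (gamma_alt l K) T
    = delta_scaled a m l (card T / K) (signed_count T / K) (signed_count ({..<K} - T) / K)"
proof -
  let ?U = "{..<K} - T"
  have "real (card ?U) = real K - real (card T)"
    using T card_mono[OF finite_lessThan T] by (simp add: card_Diff_subset finite_subset of_nat_diff)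
  then have card_U: "real (card ?U) / real K = 1 - real (card T) / real K"
    using K by (simp add: diff_divide_distrib)
  have all: "real (card {..<K}) / real K = 1"
    "signed_count {..<K} / real K = signed_count T / real K + signed_count ?U / real K"
    using K signed_count_compl[OF T] by (simp_all add: add_divide_distrib[symmetric])
  have cT: "real (card T) = real (card T) / real K * real K"
    using K by simp
  have "delta_resid (equicorr_mat K (1 / K)) (pi_alt a m K) (gamma_alt l K) T
      = delta_equicorr (1 / K) (card T) (\<Sum>i\<in>T. pi_alt a m K $ i) (\<Sum>i<K. pi_alt a m K $ i)
          (\<Sum>i\<in>T. gamma_alt l K $ i) (\<Sum>i\<in>?U. gamma_alt l K $ i)
          (\<Sum>i\<in>T. pi_alt a m K $ i * gamma_alt l K $ i) (\<Sum>i\<in>?U. pi_alt a m K $ i * gamma_alt l K $ i)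
          (\<Sum>i\<in>T. (gamma_alt l K $ i)\<^sup>2) (\<Sum>i\<in>?U. (gamma_alt l K $ i)\<^sup>2)"
  proof (rule delta_resid_equicorr[OF T])
    have "0 \<le> 1 / real K * real (card T)"
      by simp
    then show "1 + 1 / real K * real (card T) \<noteq> 0"
      by linarith
  qed (simp_all add: pi_alt_def gamma_alt_def)
  also have "\<dots> = delta_equicorr (1 / K) (card T / K * K)
      (sqrt K * (a * (card T / K) + m * (signed_count T / K)))
      (sqrt K * (a + m * (signed_count T / K + signed_count ?U / K)))
      (K * (card T / K + l * (signed_count T / K)))
      (K * ((1 - card T / K) + l * (signed_count ?U / K)))
      (sqrt K * ((a + m * l) * (card T / K) + (a * l + m) * (signed_count T / K)))
      (sqrt K * ((a + m * l) * (1 - card T / K) + (a * l + m) * (signed_count ?U / K)))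
      (K * ((1 + l\<^sup>2) * (card T / K) + 2 * l * (signed_count T / K)))
      (K * ((1 + l\<^sup>2) * (1 - card T / K) + 2 * l * (signed_count ?U / K)))"
    by (subst cT)
      (simp only: partial_sums_alt[OF K T] partial_sums_alt[OF K Diff_subset] partial_sums_alt[OF K order_refl] card_U all
        mult_1_right)
  also have "\<dots> = delta_scaled a m l (card T / K) (signed_count T / K) (signed_count ?U / K)"
    unfolding delta_scaled_def using K by (intro delta_equicorr_scale) simp
  finally show ?thesis .
qed

lemma continuous_delta_scaled:
  assumes x: "0 < x0" "x0 < 1"
    and nz: "(a + m * l) * x0 + a * x0 * (1 + 2 * ((1 - x0) / (1 + x0))) \<noteq> 0"
  shows "continuous (at (x0, 0, 0)) (\<lambda>z. delta_scaled a m l (fst z) (fst (snd z)) (snd (snd z)))"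
proof -
  have "(1 + l\<^sup>2) * (1 - x0) > 0" "(1 + l\<^sup>2) * x0 > 0"
    using x by (simp_all add: add_pos_nonneg)
  moreover have "((1 - x0) / (1 + x0))\<^sup>2 * x0 \<ge> 0" "(2 - 2 * x0) * x0 / (1 + x0) \<ge> 0"
    using x by simp_all
  ultimately have
    "(1 + l\<^sup>2) * (1 - x0) + ((1 - x0) / (1 + x0))\<^sup>2 * x0 + (1 - x0 - (1 - x0) * x0 / (1 + x0))\<^sup>2 \<noteq> 0"
    "(1 + l\<^sup>2) * x0 + (2 - 2 * x0) * x0 / (1 + x0) + ((1 - x0) / (1 + x0))\<^sup>2 * x0
      + (x0 + (1 - x0) * x0 / (1 + x0))\<^sup>2 \<noteq> 0"
    by (smt (verit) zero_le_power2)+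
  moreover have "(a + m * l) * x0 + (1 - x0) * (a * x0) / (1 + x0) + a * (x0 + (1 - x0) * x0 / (1 + x0))
      = (a + m * l) * x0 + a * x0 * (1 + 2 * ((1 - x0) / (1 + x0)))"
  proof -
    define q where "q = (1 - x0) / (1 + x0)"
    have "(1 - x0) * (a * x0) / (1 + x0) = a * x0 * q" "(1 - x0) * x0 / (1 + x0) = x0 * q"
      unfolding q_def by simp_all
    then show ?thesis
      unfolding q_def[symmetric] by (simp add: algebra_simps)
  qed
  ultimately show ?thesis
    using nz x unfolding delta_scaled_def delta_equicorr_def Let_def
    by (intro continuous_intros) simp_all
qed


lemma delta_scaled_at_zero:
  fixes x0 :: real
  assumes l: "l\<^sup>2 = 1"
  defines "k \<equiv> (1 - x0) / (1 + x0)"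
  shows "delta_scaled a m l x0 0 0
    = (((a + m * l) * (1 - x0) + a * ((1 - x0) - 2 * k * x0))
        / (2 * (1 - x0) + k\<^sup>2 * x0 + ((1 - x0) - k * x0)\<^sup>2))
      / (((a + m * l) * x0 + a * x0 * (1 + 2 * k))
        / (2 * x0 + 2 * k * x0 + k\<^sup>2 * x0 + (x0 + k * x0)\<^sup>2))"
proof -
  have kk: "1 * (1 - x0 + l * 0) / (1 + 1 * x0) = k"
    unfolding k_def by simp
  have "(a + m * l) * (1 - x0) + (a * l + m) * 0 - k * (a * x0 + m * 0)
      + 1 * (a + m * (0 + 0)) * (1 - x0 + l * 0 - k * x0)
      = (a + m * l) * (1 - x0) + a * ((1 - x0) - 2 * k * x0)"
    and "(1 + l\<^sup>2) * (1 - x0) + 2 * l * 0 + k\<^sup>2 * x0 + 1 * (1 - x0 + l * 0 - k * x0)\<^sup>2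
      = 2 * (1 - x0) + k\<^sup>2 * x0 + ((1 - x0) - k * x0)\<^sup>2"
    and "(a + m * l) * x0 + (a * l + m) * 0 + k * (a * x0 + m * 0)
      + 1 * (a + m * (0 + 0)) * (x0 + l * 0 + k * x0)
      = (a + m * l) * x0 + a * x0 * (1 + 2 * k)"
    and "(1 + l\<^sup>2) * x0 + 2 * l * 0 + 2 * k * (x0 + l * 0) + k\<^sup>2 * x0 + 1 * (x0 + l * 0 + k * x0)\<^sup>2
      = 2 * x0 + 2 * k * x0 + k\<^sup>2 * x0 + (x0 + k * x0)\<^sup>2"
    using l by (simp_all add: algebra_simps)
  then show ?thesis
    unfolding delta_scaled_def delta_equicorr_def Let_def kk by (simp only:)
qed

lemma linear_fractional_attains:
  fixes p q r s C :: real
  assumes det: "p * s \<noteq> q * r" and C: "C * r \<noteq> p"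
  obtains \<beta> where "r * \<beta> + s \<noteq> 0" "(p * \<beta> + q) / (r * \<beta> + s) = C"
proof
  define \<beta> where "\<beta> = (C * s - q) / (p - C * r)"
  have pCr: "p - C * r \<noteq> 0"
    using C by simp
  have den: "r * \<beta> + s = (p * s - q * r) / (p - C * r)"
    unfolding \<beta>_def using pCr by (simp add: field_simps)
  then show "r * \<beta> + s \<noteq> 0"
    using det pCr by simp
  have "p * \<beta> + q = C * ((p * s - q * r) / (p - C * r))"
    unfolding \<beta>_def using pCr by (simp add: field_simps)
  then show "(p * \<beta> + q) / (r * \<beta> + s) = C"
    unfolding den using det pCr by simp
qed

lemma exists_params_delta_scaled:
  fixes x0 C :: real
  assumes x: "0 < x0" "x0 < 1"
  obtains a m l where "a + m \<noteq> 0" "delta_scaled a m l x0 0 0 = C"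
    and "continuous (at (x0, 0, 0)) (\<lambda>z. delta_scaled a m l (fst z) (fst (snd z)) (snd (snd z)))"
proof -
  define k where "k = (1 - x0) / (1 + x0)"
  have k: "k > 0"
    unfolding k_def using x by simp
  define A1 where "A1 = (1 - x0) - 2 * k * x0"
  define A2 where "A2 = x0 * (1 + 2 * k)"
  define D1 where "D1 = 2 * (1 - x0) + k\<^sup>2 * x0 + ((1 - x0) - k * x0)\<^sup>2"
  define D2 where "D2 = 2 * x0 + 2 * k * x0 + k\<^sup>2 * x0 + (x0 + k * x0)\<^sup>2"
  have D: "D1 > 0" "D2 > 0"
    unfolding D1_def D2_def using x k by (simp_all add: add_pos_nonneg)
  have frac: "(X / D1) / (Y / D2) = (D2 * X) / (D1 * Y)" for X Y
    using D by (simp add: field_simps)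
  have at_zero: "delta_scaled a m l x0 0 0
      = (D2 * ((a + m * l) * (1 - x0)) + D2 * (a * A1)) / (D1 * ((a + m * l) * x0) + D1 * (a * A2))"
    if "l\<^sup>2 = 1" for a m l
  proof -
    have "delta_scaled a m l x0 0 0
        = (((a + m * l) * (1 - x0) + a * A1) / D1) / (((a + m * l) * x0 + a * A2) / D2)"
      using delta_scaled_at_zero[OF that, of a m x0]
      unfolding A1_def A2_def D1_def D2_def k_def by (simp only: mult.assoc)
    then show ?thesis
      unfolding frac by (simp only: distrib_left)
  qed
  have cont: "continuous (at (x0, 0, 0)) (\<lambda>z. delta_scaled a m l (fst z) (fst (snd z)) (snd (snd z)))"
    if "(a + m * l) * x0 + a * A2 \<noteq> 0" for a m l
    using continuous_delta_scaled[OF x] that unfolding A2_def k_def by (simp add: mult.assoc)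
  show ?thesis
  proof (cases "C * (D1 * x0) = D2 * (1 - x0)")
    case True
    have "delta_scaled 0 1 1 x0 0 0 = (D2 * (1 - x0)) / (D1 * x0)"
      using at_zero[of 1 0 1] by simp
    also have "\<dots> = C"
      using True D x by (simp add: field_simps)
    finally have "delta_scaled 0 1 1 x0 0 0 = C" .
    then show ?thesis
      using that[of 0 1 1] cont[of 0 1 1] x by simp
  next
    case False
    text \<open>With \<open>a = 1\<close> the value at \<open>(x0, 0, 0)\<close> is a linear fractional function of
      \<open>\<beta> = 1 + m l\<close>; the sign \<open>l\<close> is chosen to keep \<open>a + m \<noteq> 0\<close>.\<close>
    have "D2 * (1 - x0) * (D1 * A2) \<noteq> D2 * A1 * (D1 * x0)"
      using D x k unfolding A1_def A2_def by (simp add: algebra_simps)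
    then obtain \<beta> where nz: "D1 * x0 * \<beta> + D1 * A2 \<noteq> 0"
      and \<beta>: "(D2 * (1 - x0) * \<beta> + D2 * A1) / (D1 * x0 * \<beta> + D1 * A2) = C"
      by (rule linear_fractional_attains[OF _ False])
    define l :: real where "l = (if \<beta> = 0 then - 1 else 1)"
    define m where "m = (\<beta> - 1) * l"
    have l2: "l\<^sup>2 = 1"
      unfolding l_def by simp
    have \<beta>_eq: "1 + m * l = \<beta>"
      unfolding m_def using l2 by (simp add: power2_eq_square algebra_simps)
    have "D1 * ((1 + m * l) * x0 + 1 * A2) \<noteq> 0"
      using nz unfolding \<beta>_eq by (simp add: algebra_simps)
    then have "(1 + m * l) * x0 + 1 * A2 \<noteq> 0"
      by simp
    moreover have "delta_scaled 1 m l x0 0 0 = C"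
      using at_zero[OF l2, of 1 m] \<beta> unfolding \<beta>_eq by (simp add: algebra_simps)
    moreover have "1 + m \<noteq> 0"
      unfolding m_def l_def by auto
    ultimately show ?thesis
      using that[of 1 m l] cont[of 1 m l] by simp
  qed
qed

section \<open>Uniformly random subsets of fixed size\<close>

definition subsets_card :: "nat \<Rightarrow> nat \<Rightarrow> nat set set" where
  "subsets_card K d = {T. T \<subseteq> {..<K} \<and> card T = d}"

lemma S_dist_eq: "S_dist K d = pmf_of_set (subsets_card K d)"
  unfolding S_dist_def subsets_card_def ..

lemma finite_subsets_card [simp]: "finite (subsets_card K d)"
  unfolding subsets_card_def by (rule finite_subset[of _ "Pow {..<K}"]) auto

lemma subsets_card_nonempty: "d \<le> K \<Longrightarrow> subsets_card K d \<noteq> {}"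
  unfolding subsets_card_def by (auto intro!: exI[of _ "{..<d}"])

lemma bij_betw_insert_pair_subsets_card:
  assumes ij: "i < K" "j < K" "i \<noteq> j"
  shows "bij_betw (\<lambda>U. insert i (insert j U)) {U. U \<subseteq> {..<K} - {i, j} \<and> card U + 2 = d}
    {T \<in> subsets_card K d. i \<in> T \<and> j \<in> T}"
proof (rule bij_betw_byWitness[where f' = "\<lambda>T. T - {i, j}"])
  show "\<forall>U\<in>{U. U \<subseteq> {..<K} - {i, j} \<and> card U + 2 = d}. insert i (insert j U) - {i, j} = U"
    by auto
  show "\<forall>T\<in>{T \<in> subsets_card K d. i \<in> T \<and> j \<in> T}. insert i (insert j (T - {i, j})) = T"
    by auto
  show "(\<lambda>U. insert i (insert j U)) ` {U. U \<subseteq> {..<K} - {i, j} \<and> card U + 2 = d}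
      \<subseteq> {T \<in> subsets_card K d. i \<in> T \<and> j \<in> T}"
  proof (rule image_subsetI)
    fix U assume "U \<in> {U. U \<subseteq> {..<K} - {i, j} \<and> card U + 2 = d}"
    then have U: "U \<subseteq> {..<K} - {i, j}" "d = card U + 2"
      by auto
    then have "finite U"
      using finite_subset by blast
    then have "card (insert i (insert j U)) = card U + 2"
      using U(1) ij(3) by (auto simp: card_insert_if)
    then show "insert i (insert j U) \<in> {T \<in> subsets_card K d. i \<in> T \<and> j \<in> T}"
      unfolding subsets_card_def using U ij by auto
  qed
  show "(\<lambda>T. T - {i, j}) ` {T \<in> subsets_card K d. i \<in> T \<and> j \<in> T}
      \<subseteq> {U. U \<subseteq> {..<K} - {i, j} \<and> card U + 2 = d}"
  proof (rule image_subsetI)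
    fix T assume "T \<in> {T \<in> subsets_card K d. i \<in> T \<and> j \<in> T}"
    then have T: "T \<in> subsets_card K d" "i \<in> T" "j \<in> T"
      by auto
    then have "T \<subseteq> {..<K}" "card T = d" "finite T"
      unfolding subsets_card_def using finite_subset by auto
    moreover have "card {i, j} \<le> card T"
      using \<open>finite T\<close> T(2,3) by (intro card_mono) auto
    ultimately show "T - {i, j} \<in> {U. U \<subseteq> {..<K} - {i, j} \<and> card U + 2 = d}"
      using T(2,3) ij(3) by (auto simp: card_Diff_subset)
  qed
qed

lemma card_subsets_card_containing_pair:
  assumes ij: "i < K" "j < K" "i \<noteq> j"
  shows "card {T \<in> subsets_card K d. i \<in> T \<and> j \<in> T} = (if 2 \<le> d then (K - 2) choose (d - 2) else 0)"
proof -
  have "card {T \<in> subsets_card K d. i \<in> T \<and> j \<in> T} = card {U. U \<subseteq> {..<K} - {i, j} \<and> card U + 2 = d}"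
    by (rule bij_betw_same_card[OF bij_betw_insert_pair_subsets_card[OF ij], symmetric])
  also have "\<dots> = (if 2 \<le> d then (K - 2) choose (d - 2) else 0)"
  proof (cases "2 \<le> d")
    case True
    then have "{U. U \<subseteq> {..<K} - {i, j} \<and> card U + 2 = d} = {U. U \<subseteq> {..<K} - {i, j} \<and> card U = d - 2}"
      by auto
    moreover have "card ({..<K} - {i, j}) = K - 2"
      using ij by (simp add: card_Diff_subset)
    ultimately show ?thesis
      using True n_subsets[of "{..<K} - {i, j}" "d - 2"] by simp
  qed simp
  finally show ?thesis .
qed

lemma sum_square_sum_over_sets:
  fixes f :: "nat \<Rightarrow> real"
  assumes fin: "finite F" and sub: "\<And>T. T \<in> F \<Longrightarrow> T \<subseteq> {..<K}"
  shows "(\<Sum>T\<in>F. (\<Sum>i\<in>T. f i)\<^sup>2)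
    = (\<Sum>i<K. \<Sum>j<K. f i * f j * card {T \<in> F. i \<in> T \<and> j \<in> T})"
proof -
  let ?h = "\<lambda>T i j. if i \<in> T \<and> j \<in> T then f i * f j else 0"
  have sq: "(\<Sum>i\<in>T. f i)\<^sup>2 = (\<Sum>i<K. \<Sum>j<K. ?h T i j)" if "T \<in> F" for T
  proof -
    have "(\<Sum>i\<in>T. f i) = (\<Sum>i<K. if i \<in> T then f i else 0)"
      using sub[OF that] by (simp add: sum.If_cases Int_absorb1)
    then have "(\<Sum>i\<in>T. f i)\<^sup>2
        = (\<Sum>i<K. \<Sum>j<K. (if i \<in> T then f i else 0) * (if j \<in> T then f j else 0))"
      by (simp add: power2_eq_square sum_product)
    also have "\<dots> = (\<Sum>i<K. \<Sum>j<K. ?h T i j)"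
      by (intro sum.cong refl) auto
    finally show ?thesis .
  qed
  have "(\<Sum>T\<in>F. (\<Sum>i\<in>T. f i)\<^sup>2) = (\<Sum>T\<in>F. \<Sum>i<K. \<Sum>j<K. ?h T i j)"
    using sq by (rule sum.cong[OF refl])
  also have "\<dots> = (\<Sum>i<K. \<Sum>T\<in>F. \<Sum>j<K. ?h T i j)"
    by (rule sum.swap)
  also have "\<dots> = (\<Sum>i<K. \<Sum>j<K. \<Sum>T\<in>F. ?h T i j)"
    by (intro sum.cong refl) (rule sum.swap)
  also have "\<dots> = (\<Sum>i<K. \<Sum>j<K. f i * f j * card {T \<in> F. i \<in> T \<and> j \<in> T})"
  proof (intro sum.cong refl)
    fix i j
    show "(\<Sum>T\<in>F. ?h T i j) = f i * f j * card {T \<in> F. i \<in> T \<and> j \<in> T}"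
      using sum.inter_filter[OF fin, of "\<lambda>_. f i * f j" "\<lambda>T. i \<in> T \<and> j \<in> T", symmetric]
      by (simp add: ac_simps)
  qed
  finally show ?thesis .
qed

text \<open>A constant off-diagonal weight \<open>cc\<close> contributes \<open>cc ((\<Sum>i<K. alt_sign i)\<^sup>2 - K) \<le> 0\<close>,
  because the alternating signs have partial sums in \<open>{0, 1}\<close>.\<close>

lemma double_sum_signs_const_offdiag_le:
  fixes c :: "nat \<Rightarrow> nat \<Rightarrow> real"
  assumes offdiag: "\<And>i j. i < K \<Longrightarrow> j < K \<Longrightarrow> i \<noteq> j \<Longrightarrow> c i j = cc"
    and diag: "\<And>i. c i i \<le> N" and cc: "0 \<le> cc"
  shows "(\<Sum>i<K. \<Sum>j<K. alt_sign i * alt_sign j * c i j) \<le> real K * N"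
proof -
  have "(\<Sum>i<K. \<Sum>j<K. alt_sign i * alt_sign j * c i j)
      = (\<Sum>i<K. \<Sum>j<K. cc * (alt_sign i * alt_sign j) + (if i = j then c i i - cc else 0))"
  proof (intro sum.cong refl)
    fix i j assume "i \<in> {..<K}" "j \<in> {..<K}"
    then show "alt_sign i * alt_sign j * c i j
        = cc * (alt_sign i * alt_sign j) + (if i = j then c i i - cc else 0)"
      using offdiag[of i j] alt_sign_sq[of i] by (auto simp: power2_eq_square algebra_simps)
  qed
  also have "\<dots> = cc * (signed_count {..<K})\<^sup>2 + (\<Sum>i<K. c i i - cc)"
  proof -
    have "(\<Sum>i<K. \<Sum>j<K. cc * (alt_sign i * alt_sign j)) = cc * (signed_count {..<K})\<^sup>2"
      unfolding signed_count_def power2_eq_square sum_product unfolding sum_distrib_left ..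
    moreover have "(\<Sum>i<K. \<Sum>j<K. if i = j then c i i - cc else 0) = (\<Sum>i<K. c i i - cc)"
      by (intro sum.cong refl) simp
    ultimately show ?thesis
      by (simp add: sum.distrib)
  qed
  also have "\<dots> \<le> real K * N"
  proof (cases "K = 0")
    case False
    have "(signed_count {..<K})\<^sup>2 \<le> 1"
      by (simp add: signed_count_lessThan)
    then have "cc * (signed_count {..<K})\<^sup>2 \<le> cc * real K"
      using False cc by (simp add: mult_left_le order_trans[OF _ mult_left_mono[of 1 "real K" cc]])
    moreover have "(\<Sum>i<K. c i i - cc) \<le> real K * (N - cc)"
      using sum_mono[of "{..<K}" "\<lambda>i. c i i - cc" "\<lambda>_. N - cc"] diag by simp
    ultimately show ?thesis
      by (simp add: algebra_simps)
  qed (simp add: signed_count_def)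
  finally show ?thesis .
qed

lemma sum_signed_count_sq_le:
  "(\<Sum>T\<in>subsets_card K d. (signed_count T)\<^sup>2) \<le> real K * card (subsets_card K d)"
proof -
  have "(\<Sum>T\<in>subsets_card K d. (signed_count T)\<^sup>2)
      = (\<Sum>i<K. \<Sum>j<K. alt_sign i * alt_sign j * card {T \<in> subsets_card K d. i \<in> T \<and> j \<in> T})"
    unfolding signed_count_def by (rule sum_square_sum_over_sets) (auto simp: subsets_card_def)
  also have "\<dots> \<le> real K * card (subsets_card K d)"
    by (rule double_sum_signs_const_offdiag_le[where cc = "real (if 2 \<le> d then (K - 2) choose (d - 2) else 0)"])
      (simp_all add: card_subsets_card_containing_pair card_mono)
  finally show ?thesis .
qed

lemma prob_abs_signed_count_ge:
  assumes d: "d \<le> K" and t: "t > 0"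
  shows "measure_pmf.prob (S_dist K d) {T. t \<le> \<bar>signed_count T\<bar>} \<le> real K / t\<^sup>2"
proof -
  let ?S = "subsets_card K d" and ?B = "{T. t \<le> \<bar>signed_count T\<bar>}"
  have N: "real (card ?S) > 0"
    using subsets_card_nonempty[OF d] by (simp add: card_gt_0_iff)
  have "real (card (?S \<inter> ?B)) * t\<^sup>2 = (\<Sum>T\<in>?S \<inter> ?B. t\<^sup>2)"
    by simp
  also have "\<dots> \<le> (\<Sum>T\<in>?S \<inter> ?B. (signed_count T)\<^sup>2)"
    using t by (intro sum_mono) (simp add: abs_le_square_iff[symmetric])
  also have "\<dots> \<le> (\<Sum>T\<in>?S. (signed_count T)\<^sup>2)"
    by (intro sum_mono2) auto
  also have "\<dots> \<le> real K * card ?S"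
    by (rule sum_signed_count_sq_le)
  finally have "real (card (?S \<inter> ?B)) * t\<^sup>2 \<le> real K * card ?S" .
  then show ?thesis
    unfolding S_dist_eq measure_pmf_of_set[OF subsets_card_nonempty[OF d] finite_subsets_card]
    using N t by (simp add: field_simps)
qed

lemma variance_pmf_of_set_le:
  fixes f :: "'a \<Rightarrow> real"
  assumes fin: "finite S" and ne: "S \<noteq> {}"
  shows "measure_pmf.variance (pmf_of_set S) f \<le> (\<Sum>T\<in>S. (f T - h)\<^sup>2) / card S"
proof -
  define \<mu> where "\<mu> = (\<Sum>T\<in>S. f T) / card S"
  have N: "real (card S) > 0"
    using fin ne by (simp add: card_gt_0_iff)
  have E: "measure_pmf.expectation (pmf_of_set S) f = \<mu>"
    unfolding \<mu>_def by (rule integral_pmf_of_set[OF ne fin])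
  have V: "measure_pmf.variance (pmf_of_set S) f = (\<Sum>T\<in>S. (f T - \<mu>)\<^sup>2) / card S"
    unfolding E by (rule integral_pmf_of_set[OF ne fin])
  have centered: "(\<Sum>T\<in>S. f T - \<mu>) = 0"
    unfolding \<mu>_def using N by (simp add: sum_subtractf)
  have "(\<Sum>T\<in>S. (f T - h)\<^sup>2) = (\<Sum>T\<in>S. (f T - \<mu>)\<^sup>2 + 2 * (\<mu> - h) * (f T - \<mu>) + (\<mu> - h)\<^sup>2)"
    by (intro sum.cong) (auto simp: power2_eq_square algebra_simps)
  also have "\<dots> = (\<Sum>T\<in>S. (f T - \<mu>)\<^sup>2) + 2 * (\<mu> - h) * (\<Sum>T\<in>S. f T - \<mu>) + card S * (\<mu> - h)\<^sup>2"
    by (simp add: sum.distrib sum_distrib_left)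
  finally have "(\<Sum>T\<in>S. (f T - \<mu>)\<^sup>2) \<le> (\<Sum>T\<in>S. (f T - h)\<^sup>2)"
    unfolding centered by simp
  then show ?thesis
    unfolding V using N by (simp add: divide_right_mono)
qed

lemma block_var_equicorr:
  assumes A: "A \<subseteq> {..<K}"
  shows "block_var (equicorr_mat K \<rho>) p A = (\<Sum>i\<in>A. (p $ i)\<^sup>2) + \<rho> * (\<Sum>i\<in>A. p $ i)\<^sup>2"
proof -
  have fin: "finite A"
    using A finite_subset by blast
  have "equicorr_mat K \<rho> $$ (i, j) = (if i = j then 1 else 0) + \<rho>" if "i \<in> A" "j \<in> A" for i j
  proof -
    have "i < K" "j < K"
      using that A by auto
    then show ?thesis
      by (simp add: equicorr_mat_def)
  qed
  then have "block_var (equicorr_mat K \<rho>) p A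
      = (\<Sum>i\<in>A. \<Sum>j\<in>A. (if i = j then (p $ i)\<^sup>2 else 0) + \<rho> * (p $ i * p $ j))"
    unfolding block_var_def by (intro sum.cong refl) (auto simp: algebra_simps power2_eq_square)
  also have "\<dots> = (\<Sum>i\<in>A. (p $ i)\<^sup>2) + \<rho> * (\<Sum>i\<in>A. \<Sum>j\<in>A. p $ i * p $ j)"
    using fin by (simp add: sum.distrib sum_distrib_left)
  also have "\<dots> = (\<Sum>i\<in>A. (p $ i)\<^sup>2) + \<rho> * (\<Sum>i\<in>A. p $ i)\<^sup>2"
    by (simp add: power2_eq_square sum_product)
  finally show ?thesis .
qed

lemma block_var_alt:
  assumes K: "K > 0" and A: "A \<subseteq> {..<K}"
  defines "c \<equiv> real (card A) / real K" and "y \<equiv> signed_count A / real K"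
  shows "block_var (equicorr_mat K (1 / K)) (pi_alt a m K) A
    = (a\<^sup>2 + m\<^sup>2) * c + 2 * a * m * y + (a * c + m * y)\<^sup>2"
  using partial_sums_alt(1,5)[OF K A, of a m] K unfolding block_var_equicorr[OF A] c_def y_def
  by (simp add: power_mult_distrib)

lemma block_var_alt_deviation:
  assumes K: "K > 0" and A: "A \<subseteq> {..<K}"
  shows "\<bar>block_var (equicorr_mat K (1 / K)) (pi_alt a m K) A
      - ((a\<^sup>2 + m\<^sup>2) * (card A / K) + (a * (card A / K))\<^sup>2)\<bar>
    \<le> (4 * \<bar>a * m\<bar> + m\<^sup>2) * \<bar>signed_count A / K\<bar>"
proof -
  define c where "c = real (card A) / real K"
  define y where "y = signed_count A / real K"
  have cA: "card A \<le> K"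
    using card_mono[OF finite_lessThan A] by simp
  have c: "0 \<le> c" "c \<le> 1"
    unfolding c_def using K cA by simp_all
  have y: "\<bar>y\<bar> \<le> 1"
    unfolding y_def using K abs_signed_count_le[OF finite_subset[OF A finite_lessThan]] cA
    by (simp add: abs_divide)
  have eq: "block_var (equicorr_mat K (1 / K)) (pi_alt a m K) A - ((a\<^sup>2 + m\<^sup>2) * c + (a * c)\<^sup>2)
      = y * (2 * a * m + 2 * a * m * c + m\<^sup>2 * y)"
    unfolding block_var_alt[OF K A] c_def y_def by (simp add: power2_eq_square algebra_simps)
  have bound: "\<bar>2 * a * m + 2 * a * m * c + m\<^sup>2 * y\<bar> \<le> 4 * \<bar>a * m\<bar> + m\<^sup>2"
  proof -
    have "\<bar>2 * a * m * c\<bar> = 2 * \<bar>a * m\<bar> * c" "\<bar>m\<^sup>2 * y\<bar> = m\<^sup>2 * \<bar>y\<bar>"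
      using c by (simp_all add: abs_mult)
    moreover have "2 * \<bar>a * m\<bar> * c \<le> 2 * \<bar>a * m\<bar>" "m\<^sup>2 * \<bar>y\<bar> \<le> m\<^sup>2"
      using c y by (simp_all add: mult_left_le)
    ultimately have "\<bar>2 * a * m * c\<bar> \<le> 2 * \<bar>a * m\<bar>" "\<bar>m\<^sup>2 * y\<bar> \<le> m\<^sup>2"
      by simp_all
    moreover have "\<bar>2 * a * m\<bar> = 2 * \<bar>a * m\<bar>"
      by (simp add: abs_mult)
    ultimately show ?thesis
      using abs_triangle_ineq[of "2 * a * m + 2 * a * m * c" "m\<^sup>2 * y"]
        abs_triangle_ineq[of "2 * a * m" "2 * a * m * c"]
      by linarith
  qed
  have "\<bar>y * (2 * a * m + 2 * a * m * c + m\<^sup>2 * y)\<bar> = \<bar>y\<bar> * \<bar>2 * a * m + 2 * a * m * c + m\<^sup>2 * y\<bar>"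
    by (rule abs_mult)
  also have "\<dots> \<le> \<bar>y\<bar> * (4 * \<bar>a * m\<bar> + m\<^sup>2)"
    by (rule mult_left_mono[OF bound]) simp
  finally show ?thesis
    unfolding c_def[symmetric] y_def[symmetric] eq by (simp add: mult.commute)
qed

lemma block_var_alt_sq_deviation_le:
  assumes K: "K > 0" and A: "A \<subseteq> {..<K}"
  shows "(block_var (equicorr_mat K (1 / K)) (pi_alt a m K) A
      - ((a\<^sup>2 + m\<^sup>2) * (card A / K) + (a * (card A / K))\<^sup>2))\<^sup>2
    \<le> (4 * \<bar>a * m\<bar> + m\<^sup>2)\<^sup>2 / (real K)\<^sup>2 * (signed_count A)\<^sup>2"
proof -
  let ?dev = "block_var (equicorr_mat K (1 / K)) (pi_alt a m K) A
    - ((a\<^sup>2 + m\<^sup>2) * (card A / K) + (a * (card A / K))\<^sup>2)"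
  have "?dev\<^sup>2 \<le> ((4 * \<bar>a * m\<bar> + m\<^sup>2) * \<bar>signed_count A / K\<bar>)\<^sup>2"
    using power_mono[OF block_var_alt_deviation[OF K A, of a m], of 2] by simp
  also have "\<dots> = (4 * \<bar>a * m\<bar> + m\<^sup>2)\<^sup>2 / (real K)\<^sup>2 * (signed_count A)\<^sup>2"
    by (simp add: power_mult_distrib power_divide)
  finally show ?thesis .
qed

lemma signed_count_compl_sq_le:
  assumes "T \<subseteq> {..<K}"
  shows "(signed_count ({..<K} - T))\<^sup>2 \<le> 2 + 2 * (signed_count T)\<^sup>2"
proof -
  define s where "s = signed_count {..<K}"
  have "s\<^sup>2 \<le> 1"
    unfolding s_def by (simp add: signed_count_lessThan)
  moreover have "(s - signed_count T)\<^sup>2 + (s + signed_count T)\<^sup>2 = 2 * s\<^sup>2 + 2 * (signed_count T)\<^sup>2"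
    by (simp add: power2_eq_square algebra_simps)
  moreover have "0 \<le> (s + signed_count T)\<^sup>2"
    by simp
  ultimately show ?thesis
    unfolding signed_count_compl[OF assms] s_def[symmetric] by linarith
qed

lemma variance_block_var_alt_le:
  fixes A :: "nat set \<Rightarrow> nat set"
  assumes K: "K > 0" and d: "d \<le> K"
    and A: "\<And>T. T \<in> subsets_card K d \<Longrightarrow> A T \<subseteq> {..<K} \<and> card (A T) = n"
    and sq: "\<And>T. T \<in> subsets_card K d \<Longrightarrow> (signed_count (A T))\<^sup>2 \<le> 2 + 2 * (signed_count T)\<^sup>2"
  shows "measure_pmf.variance (S_dist K d)
      (\<lambda>T. block_var (equicorr_mat K (1 / K)) (pi_alt a m K) (A T))
    \<le> 4 * (4 * \<bar>a * m\<bar> + m\<^sup>2)\<^sup>2 / K"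
proof -
  define B where "B = (4 * \<bar>a * m\<bar> + m\<^sup>2)\<^sup>2"
  define h where "h = (a\<^sup>2 + m\<^sup>2) * (n / K) + (a * (n / K))\<^sup>2"
  define N where "N = real (card (subsets_card K d))"
  let ?f = "\<lambda>T. block_var (equicorr_mat K (1 / K)) (pi_alt a m K) (A T)"
  have N: "N > 0"
    unfolding N_def using subsets_card_nonempty[OF d] by (simp add: card_gt_0_iff)
  have B: "B \<ge> 0"
    unfolding B_def by simp
  have dev: "(?f T - h)\<^sup>2 \<le> B / K\<^sup>2 * (2 + 2 * (signed_count T)\<^sup>2)" if T: "T \<in> subsets_card K d" for T
  proof -
    have "(?f T - h)\<^sup>2 \<le> B / K\<^sup>2 * (signed_count (A T))\<^sup>2"
      using block_var_alt_sq_deviation_le[OF K, of "A T" a m] A[OF T] unfolding h_def B_def by simp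
    also have "\<dots> \<le> B / K\<^sup>2 * (2 + 2 * (signed_count T)\<^sup>2)"
      using sq[OF T] B by (intro mult_left_mono) simp_all
    finally show ?thesis .
  qed
  have "measure_pmf.variance (S_dist K d) ?f \<le> (\<Sum>T\<in>subsets_card K d. (?f T - h)\<^sup>2) / N"
    unfolding S_dist_eq N_def using subsets_card_nonempty[OF d] by (intro variance_pmf_of_set_le) simp_all
  also have "\<dots> \<le> (\<Sum>T\<in>subsets_card K d. B / K\<^sup>2 * (2 + 2 * (signed_count T)\<^sup>2)) / N"
    using N dev by (intro divide_right_mono sum_mono) simp_all
  also have "\<dots> = B / K\<^sup>2 * (2 * N + 2 * (\<Sum>T\<in>subsets_card K d. (signed_count T)\<^sup>2)) / N"
  proof -
    have "(\<Sum>T\<in>subsets_card K d. 2 + 2 * (signed_count T)\<^sup>2)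
        = 2 * N + 2 * (\<Sum>T\<in>subsets_card K d. (signed_count T)\<^sup>2)"
      unfolding N_def by (simp add: sum.distrib sum_distrib_left)
    then show ?thesis
      by (simp only: sum_distrib_left[symmetric])
  qed
  also have "\<dots> \<le> B / K\<^sup>2 * (2 * N + 2 * (real K * N)) / N"
    using sum_signed_count_sq_le[of K d] B N unfolding N_def
    by (intro divide_right_mono mult_left_mono add_left_mono) simp_all
  also have "\<dots> = B * (2 + 2 * K) / K\<^sup>2"
    using N K by (simp add: field_simps)
  also have "\<dots> \<le> B * (4 * K) / K\<^sup>2"
    using K B by (intro divide_right_mono mult_left_mono) simp_all
  also have "\<dots> = 4 * B / K"
    using K by (simp add: power2_eq_square)
  finally show ?thesis
    unfolding B_def .
qed

lemma variance_block_var_alt_tendsto_zero: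
  assumes d: "\<And>K. d K \<le> K"
  shows "(\<lambda>K. measure_pmf.variance (S_dist K (d K))
      (\<lambda>T. block_var (equicorr_mat K (1 / K)) (pi_alt a m K) T)) \<longlonglongrightarrow> 0"
    and "(\<lambda>K. measure_pmf.variance (S_dist K (d K))
      (\<lambda>T. block_var (equicorr_mat K (1 / K)) (pi_alt a m K) ({..<K} - T))) \<longlonglongrightarrow> 0"
proof -
  have lim: "(\<lambda>K. measure_pmf.variance (S_dist K (d K))
      (\<lambda>T. block_var (equicorr_mat K (1 / K)) (pi_alt a m K) (A K T))) \<longlonglongrightarrow> 0"
    if A: "\<And>K T. T \<in> subsets_card K (d K) \<Longrightarrow> A K T \<subseteq> {..<K} \<and> card (A K T) = n K"
      and sq: "\<And>K T. T \<in> subsets_card K (d K)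
        \<Longrightarrow> (signed_count (A K T))\<^sup>2 \<le> 2 + 2 * (signed_count T)\<^sup>2"
    for A :: "nat \<Rightarrow> nat set \<Rightarrow> nat set" and n :: "nat \<Rightarrow> nat"
  proof (rule tendsto_sandwich[OF _ _ tendsto_const lim_const_over_n])
    show "\<forall>\<^sub>F K in sequentially. 0 \<le> measure_pmf.variance (S_dist K (d K))
        (\<lambda>T. block_var (equicorr_mat K (1 / K)) (pi_alt a m K) (A K T))"
      by (simp add: measure_pmf.variance_positive)
    show "\<forall>\<^sub>F K in sequentially. measure_pmf.variance (S_dist K (d K))
        (\<lambda>T. block_var (equicorr_mat K (1 / K)) (pi_alt a m K) (A K T))
      \<le> 4 * (4 * \<bar>a * m\<bar> + m\<^sup>2)\<^sup>2 / real K"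
      using eventually_gt_at_top[of 0]
      by eventually_elim (use variance_block_var_alt_le[OF _ d A sq] in blast)
  qed
  show "(\<lambda>K. measure_pmf.variance (S_dist K (d K))
      (\<lambda>T. block_var (equicorr_mat K (1 / K)) (pi_alt a m K) T)) \<longlonglongrightarrow> 0"
    by (rule lim[where A = "\<lambda>K T. T" and n = d]) (auto simp: subsets_card_def)
  show "(\<lambda>K. measure_pmf.variance (S_dist K (d K))
      (\<lambda>T. block_var (equicorr_mat K (1 / K)) (pi_alt a m K) ({..<K} - T))) \<longlonglongrightarrow> 0"
  proof (rule lim[where A = "\<lambda>K T. {..<K} - T" and n = "\<lambda>K. K - d K"])
    fix K T assume "T \<in> subsets_card K (d K)"
    then have T: "T \<subseteq> {..<K}" "card T = d K"
      unfolding subsets_card_def by auto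
    then show "{..<K} - T \<subseteq> {..<K} \<and> card ({..<K} - T) = K - d K"
      by (simp add: card_Diff_subset finite_subset)
    show "(signed_count ({..<K} - T))\<^sup>2 \<le> 2 + 2 * (signed_count T)\<^sup>2"
      by (rule signed_count_compl_sq_le[OF T(1)])
  qed
qed

section \<open>Convergence in probability of the ratio\<close>

lemma continuous_at_triple_eps_delta:
  fixes G :: "real \<Rightarrow> real \<Rightarrow> real \<Rightarrow> real"
  assumes cont: "continuous (at (a, b, c)) (\<lambda>z. G (fst z) (fst (snd z)) (snd (snd z)))" and e: "e > 0"
  obtains \<delta> where "\<delta> > 0"
    and "\<And>x y w. \<bar>x - a\<bar> < \<delta> \<Longrightarrow> \<bar>y - b\<bar> < \<delta> \<Longrightarrow> \<bar>w - c\<bar> < \<delta> \<Longrightarrow> \<bar>G x y w - G a b c\<bar> < e"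
proof -
  obtain d where d: "d > 0"
    and close: "\<And>z. dist z (a, b, c) < d
      \<Longrightarrow> dist (G (fst z) (fst (snd z)) (snd (snd z))) (G a b c) < e"
    using cont e unfolding continuous_at_eps_delta by fastforce
  show ?thesis
  proof (rule that[of "d / 3"])
    show "d / 3 > 0"
      using d by simp
    fix x y w assume "\<bar>x - a\<bar> < d / 3" "\<bar>y - b\<bar> < d / 3" "\<bar>w - c\<bar> < d / 3"
    moreover have "dist (x, y, w) (a, b, c) \<le> \<bar>x - a\<bar> + (\<bar>y - b\<bar> + \<bar>w - c\<bar>)"
      using sqrt_sum_squares_le_sum_abs[of "dist x a" "dist (y, w) (b, c)"]
        sqrt_sum_squares_le_sum_abs[of "dist y b" "dist w c"]
      by (simp add: dist_Pair_Pair dist_real_def)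
    ultimately have "dist (x, y, w) (a, b, c) < d"
      by linarith
    then show "\<bar>G x y w - G a b c\<bar> < e"
      using close[of "(x, y, w)"] by (simp add: dist_real_def)
  qed
qed

lemma prob_far_le_prob_signed_count:
  fixes G :: "real \<Rightarrow> real \<Rightarrow> real" and D :: "nat set \<Rightarrow> real"
  assumes close: "\<And>y w. \<bar>y\<bar> < \<delta> \<Longrightarrow> \<bar>w\<bar> < \<delta> \<Longrightarrow> \<bar>G y w - c\<bar> < e"
    and K: "K > 0" and K_large: "1 / real K < \<delta> / 2" and d: "d \<le> K"
    and DG: "\<And>T. T \<in> subsets_card K d \<Longrightarrow> D T = G (signed_count T / K) (signed_count ({..<K} - T) / K)"
  shows "measure_pmf.prob (S_dist K d) {T. \<bar>D T - c\<bar> > e}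
    \<le> measure_pmf.prob (S_dist K d) {T. \<delta> * K / 2 \<le> \<bar>signed_count T\<bar>}"
proof -
  let ?S = "subsets_card K d"
  have bad: "\<delta> * K / 2 \<le> \<bar>signed_count T\<bar>" if T: "T \<in> ?S" and far: "\<bar>D T - c\<bar> > e" for T
  proof (rule ccontr)
    assume "\<not> \<delta> * K / 2 \<le> \<bar>signed_count T\<bar>"
    then have y: "\<bar>signed_count T / K\<bar> < \<delta> / 2"
      using K by (simp add: abs_divide field_simps)
    have "\<bar>signed_count ({..<K} - T)\<bar> \<le> 1 + \<bar>signed_count T\<bar>"
      using T unfolding subsets_card_def by (auto simp: signed_count_compl signed_count_lessThan)
    then have "\<bar>signed_count ({..<K} - T) / K\<bar> \<le> 1 / K + \<bar>signed_count T / K\<bar>"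
      using K by (simp add: abs_divide add_divide_distrib[symmetric] divide_right_mono)
    then have "\<bar>G (signed_count T / K) (signed_count ({..<K} - T) / K) - c\<bar> < e"
      using y K_large by (intro close) linarith+
    then show False
      using far DG[OF T] by simp
  qed
  have "measure_pmf.prob (S_dist K d) {T. \<bar>D T - c\<bar> > e} = card (?S \<inter> {T. \<bar>D T - c\<bar> > e}) / card ?S"
    unfolding S_dist_eq by (rule measure_pmf_of_set[OF subsets_card_nonempty[OF d] finite_subsets_card])
  also have "\<dots> \<le> card (?S \<inter> {T. \<delta> * K / 2 \<le> \<bar>signed_count T\<bar>}) / card ?S"
    using bad by (intro divide_right_mono) (auto intro!: card_mono)
  also have "\<dots> = measure_pmf.prob (S_dist K d) {T. \<delta> * K / 2 \<le> \<bar>signed_count T\<bar>}"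
    unfolding S_dist_eq
    by (rule measure_pmf_of_set[OF subsets_card_nonempty[OF d] finite_subsets_card, symmetric])
  finally show ?thesis .
qed

text \<open>Since \<open>signed_count T / K \<rightarrow> 0\<close> in probability (Chebyshev) and the signed count of the
  complement differs from \<open>- signed_count T\<close> by at most one, any statistic that is a continuous
  function of \<open>d/K\<close> and the two normalised signed counts converges in probability.\<close>

lemma tendsto_prob_signed_count_statistic:
  fixes G :: "real \<Rightarrow> real \<Rightarrow> real \<Rightarrow> real" and D :: "nat \<Rightarrow> nat set \<Rightarrow> real"
  assumes cont: "continuous (at (x0, 0, 0)) (\<lambda>z. G (fst z) (fst (snd z)) (snd (snd z)))"
    and dK: "\<And>K. d K \<le> K" and dlim: "(\<lambda>K. real (d K) / K) \<longlonglongrightarrow> x0"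
    and DG: "\<And>K T. K > 0 \<Longrightarrow> T \<in> subsets_card K (d K)
      \<Longrightarrow> D K T = G (d K / K) (signed_count T / K) (signed_count ({..<K} - T) / K)"
    and e: "e > 0"
  shows "(\<lambda>K. measure_pmf.prob (S_dist K (d K)) {T. \<bar>D K T - G x0 0 0\<bar> > e}) \<longlonglongrightarrow> 0"
proof -
  obtain \<delta> where \<delta>: "\<delta> > 0"
    and close: "\<And>x y w. \<bar>x - x0\<bar> < \<delta> \<Longrightarrow> \<bar>y - 0\<bar> < \<delta> \<Longrightarrow> \<bar>w - 0\<bar> < \<delta>
      \<Longrightarrow> \<bar>G x y w - G x0 0 0\<bar> < e"
    using continuous_at_triple_eps_delta[OF cont e] by blast
  obtain K0 :: nat where K0: "K0 > 2 / \<delta>"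
    using reals_Archimedean2 by blast
  have "eventually (\<lambda>K. \<bar>real (d K) / K - x0\<bar> < \<delta>) sequentially"
    using dlim \<delta> unfolding tendsto_iff dist_real_def by blast
  then have bound: "eventually (\<lambda>K. measure_pmf.prob (S_dist K (d K)) {T. \<bar>D K T - G x0 0 0\<bar> > e}
      \<le> 4 / \<delta>\<^sup>2 * (1 / real K)) sequentially"
    using eventually_ge_at_top[of "max 1 K0"]
  proof eventually_elim
    case (elim K)
    have K: "K > 0" and "real K0 \<le> real K"
      using elim(2) by simp_all
    then have "2 / \<delta> < real K"
      using K0 by linarith
    then have K_large: "1 / real K < \<delta> / 2"
      using K \<delta> by (simp add: field_simps)
    have "measure_pmf.prob (S_dist K (d K)) {T. \<bar>D K T - G x0 0 0\<bar> > e}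
        \<le> measure_pmf.prob (S_dist K (d K)) {T. \<delta> * K / 2 \<le> \<bar>signed_count T\<bar>}"
      using close[OF elim(1)] DG[OF K]
      by (intro prob_far_le_prob_signed_count[OF _ K K_large dK]) simp_all
    also have "\<dots> \<le> real K / (\<delta> * K / 2)\<^sup>2"
      using K \<delta> by (intro prob_abs_signed_count_ge dK) simp
    also have "\<dots> = 4 / \<delta>\<^sup>2 * (1 / real K)"
      using K \<delta> by (simp add: field_simps power2_eq_square)
    finally show ?case .
  qed
  have "(\<lambda>K. 4 / \<delta>\<^sup>2 * (1 / real K)) \<longlonglongrightarrow> 4 / \<delta>\<^sup>2 * 0"
    by (intro tendsto_mult tendsto_const lim_const_over_n)
  then have lim: "(\<lambda>K. 4 / \<delta>\<^sup>2 * (1 / real K)) \<longlonglongrightarrow> 0"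
    by (simp only: mult_zero_right)
  show ?thesis
    by (rule tendsto_sandwich[OF _ bound tendsto_const lim]) simp
qed

lemma delta_resid_alt_tendsto_in_prob:
  assumes cont: "continuous (at (x0, 0, 0)) (\<lambda>z. delta_scaled a m l (fst z) (fst (snd z)) (snd (snd z)))"
    and d: "\<And>K. d K \<le> K" and dlim: "(\<lambda>K. real (d K) / K) \<longlonglongrightarrow> x0" and e: "e > 0"
  shows "(\<lambda>K. measure_pmf.prob (S_dist K (d K))
      {T. \<bar>delta_resid (equicorr_mat K (1 / K)) (pi_alt a m K) (gamma_alt l K) T
        - delta_scaled a m l x0 0 0\<bar> > e}) \<longlonglongrightarrow> 0"
proof (rule tendsto_prob_signed_count_statistic[OF cont d dlim _ e])
  fix K T assume K: "K > (0::nat)" and "T \<in> subsets_card K (d K)"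
  then have T: "T \<subseteq> {..<K}" "card T = d K"
    unfolding subsets_card_def by auto
  show "delta_resid (equicorr_mat K (1 / K)) (pi_alt a m K) (gamma_alt l K) T
      = delta_scaled a m l (d K / K) (signed_count T / K) (signed_count ({..<K} - T) / K)"
    using delta_resid_alt[OF K T(1)] T(2) by simp
qed

lemma quadratic_form_eq_block_var:
  assumes A: "A \<in> carrier_mat K K" and x: "x \<in> carrier_vec K"
  shows "x \<bullet> (A *\<^sub>v x) = block_var A x {..<K}"
proof -
  have "x \<bullet> (A *\<^sub>v x) = (\<Sum>i<K. x $ i * (A *\<^sub>v x) $ i)"
    using A x by (simp add: scalar_prod_def atLeast0LessThan)
  also have "\<dots> = (\<Sum>i<K. x $ i * (\<Sum>j<K. A $$ (i, j) * x $ j))"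
    using A x by (intro sum.cong refl) (auto simp: scalar_prod_def atLeast0LessThan)
  also have "\<dots> = block_var A x {..<K}"
    unfolding block_var_def by (simp add: sum_distrib_left mult_ac)
  finally show ?thesis .
qed

lemma quadratic_form_pi_alt:
  assumes K: "K > 0"
  defines "s \<equiv> signed_count {..<K} / real K"
  shows "pi_alt a m K \<bullet> (equicorr_mat K (1 / K) *\<^sub>v pi_alt a m K)
    = (a\<^sup>2 + m\<^sup>2) + 2 * a * m * s + (a + m * s)\<^sup>2"
  using block_var_alt[OF K order_refl, of a m] K
  unfolding s_def quadratic_form_eq_block_var[OF equicorr_mat_carrier pi_alt_carrier] by simp

lemma signed_count_lessThan_ratio_bounds:
  "0 \<le> signed_count {..<K} / real K" "signed_count {..<K} / real K \<le> 1"
  by (cases "K = 0") (auto simp: signed_count_lessThan divide_le_eq_1)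

lemma quadratic_form_pi_alt_between:
  assumes K: "K > 0"
  shows "min (a\<^sup>2 + m\<^sup>2) ((a + m)\<^sup>2) \<le> pi_alt a m K \<bullet> (equicorr_mat K (1 / K) *\<^sub>v pi_alt a m K)"
    and "pi_alt a m K \<bullet> (equicorr_mat K (1 / K) *\<^sub>v pi_alt a m K)
      \<le> (a\<^sup>2 + m\<^sup>2) + 2 * \<bar>a * m\<bar> + (\<bar>a\<bar> + \<bar>m\<bar>)\<^sup>2"
proof -
  define s where "s = signed_count {..<K} / real K"
  have s: "0 \<le> s" "s \<le> 1"
    unfolding s_def by (rule signed_count_lessThan_ratio_bounds)+
  note q = quadratic_form_pi_alt[OF K, of a m, folded s_def]
  have "(a\<^sup>2 + m\<^sup>2) + 2 * a * m * s = (1 - s) * (a\<^sup>2 + m\<^sup>2) + s * (a + m)\<^sup>2"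
    by (simp add: algebra_simps power2_eq_square)
  also have "\<dots> \<ge> (1 - s) * min (a\<^sup>2 + m\<^sup>2) ((a + m)\<^sup>2) + s * min (a\<^sup>2 + m\<^sup>2) ((a + m)\<^sup>2)"
    using s by (intro add_mono mult_left_mono) auto
  finally have "min (a\<^sup>2 + m\<^sup>2) ((a + m)\<^sup>2) \<le> (a\<^sup>2 + m\<^sup>2) + 2 * a * m * s"
    by (simp add: algebra_simps)
  then show "min (a\<^sup>2 + m\<^sup>2) ((a + m)\<^sup>2) \<le> pi_alt a m K \<bullet> (equicorr_mat K (1 / K) *\<^sub>v pi_alt a m K)"
    unfolding q using zero_le_power2[of "a + m * s"] by linarith
  have "2 * a * m * s \<le> \<bar>2 * a * m\<bar> * s"
    by (rule mult_right_mono[OF abs_ge_self s(1)])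
  also have "\<dots> = 2 * \<bar>a * m\<bar> * s"
    by (simp add: abs_mult)
  also have "\<dots> \<le> 2 * \<bar>a * m\<bar>"
    using s by (simp add: mult_left_le)
  finally have am_s: "2 * a * m * s \<le> 2 * \<bar>a * m\<bar>" .
  have "\<bar>a + m * s\<bar> \<le> \<bar>a\<bar> + \<bar>m\<bar>"
    using s abs_triangle_ineq[of a "m * s"] mult_left_le[of s "\<bar>m\<bar>"] by (simp add: abs_mult)
  then have "(a + m * s)\<^sup>2 \<le> (\<bar>a\<bar> + \<bar>m\<bar>)\<^sup>2"
    using power_mono[of "\<bar>a + m * s\<bar>" "\<bar>a\<bar> + \<bar>m\<bar>" 2] by simp
  with am_s show "pi_alt a m K \<bullet> (equicorr_mat K (1 / K) *\<^sub>v pi_alt a m K)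
      \<le> (a\<^sup>2 + m\<^sup>2) + 2 * \<bar>a * m\<bar> + (\<bar>a\<bar> + \<bar>m\<bar>)\<^sup>2"
    unfolding q by linarith
qed

lemma quadratic_form_pi_alt_bounds:
  assumes am: "a + m \<noteq> 0"
  shows "\<exists>eps M. 0 < eps \<and> eps \<le> M \<and> (\<forall>K\<ge>1.
    eps \<le> pi_alt a m K \<bullet> (equicorr_mat K (1 / K) *\<^sub>v pi_alt a m K) \<and>
    pi_alt a m K \<bullet> (equicorr_mat K (1 / K) *\<^sub>v pi_alt a m K) \<le> M)"
proof (intro exI conjI allI impI)
  show "0 < min (a\<^sup>2 + m\<^sup>2) ((a + m)\<^sup>2)"
    using am by (simp add: sum_power2_gt_zero_iff)
  show "min (a\<^sup>2 + m\<^sup>2) ((a + m)\<^sup>2) \<le> (a\<^sup>2 + m\<^sup>2) + 2 * \<bar>a * m\<bar> + (\<bar>a\<bar> + \<bar>m\<bar>)\<^sup>2"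
    by (simp add: min_le_iff_disj)
qed (use quadratic_form_pi_alt_between in auto)

lemma convergent_diagonal_share_pi_alt:
  assumes am: "a + m \<noteq> 0"
  shows "convergent (\<lambda>K. (\<Sum>i<K. (pi_alt a m K $ i)\<^sup>2 * equicorr_mat K (1 / K) $$ (i, i))
    / (pi_alt a m K \<bullet> (equicorr_mat K (1 / K) *\<^sub>v pi_alt a m K)))"
proof -
  define s where "s K = signed_count {..<K} / real K" for K
  define A where "A = a\<^sup>2 + m\<^sup>2"
  have A: "A > 0"
    unfolding A_def using am by (auto simp: sum_power2_gt_zero_iff)
  have ev: "eventually (\<lambda>K. (1 + 1 / real K) * (A + 2 * a * m * s K) / (A + 2 * a * m * s K + (a + m * s K)\<^sup>2)
      = (\<Sum>i<K. (pi_alt a m K $ i)\<^sup>2 * equicorr_mat K (1 / K) $$ (i, i))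
        / (pi_alt a m K \<bullet> (equicorr_mat K (1 / K) *\<^sub>v pi_alt a m K))) sequentially"
    using eventually_gt_at_top[of 0]
  proof eventually_elim
    case (elim K)
    have "(\<Sum>i<K. (pi_alt a m K $ i)\<^sup>2 * equicorr_mat K (1 / K) $$ (i, i))
        = (\<Sum>i<K. (pi_alt a m K $ i)\<^sup>2) * (1 + 1 / real K)"
      unfolding sum_distrib_right by (intro sum.cong) (auto simp: equicorr_mat_def)
    also have "\<dots> = (1 + 1 / real K) * (A + 2 * a * m * s K)"
      using partial_sums_alt(5)[OF elim order_refl, of a m] elim unfolding A_def s_def by simp
    finally show ?case
      unfolding quadratic_form_pi_alt[OF elim] A_def s_def by simp
  qed
  have s0: "s \<longlonglongrightarrow> 0"
  proof (rule tendsto_sandwich[of "\<lambda>_. 0" _ _ "\<lambda>K. 1 / real K"])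
    show "\<forall>\<^sub>F K in sequentially. 0 \<le> s K" "\<forall>\<^sub>F K in sequentially. s K \<le> 1 / real K"
      unfolding s_def by (simp_all add: signed_count_lessThan_ratio_bounds divide_right_mono
          signed_count_lessThan)
  qed (simp_all add: lim_const_over_n)
  have "A + a\<^sup>2 \<noteq> 0"
    using A zero_le_power2[of a] by linarith
  then have "(\<lambda>K. (1 + 1 / real K) * (A + 2 * a * m * s K) / (A + 2 * a * m * s K + (a + m * s K)\<^sup>2))
      \<longlonglongrightarrow> (1 + 0) * (A + 2 * a * m * 0) / (A + 2 * a * m * 0 + (a + m * 0)\<^sup>2)"
    by (intro tendsto_intros lim_const_over_n s0) simp_all
  then show ?thesis
    unfolding convergent_def using Lim_transform_eventually[OF _ ev] by blast
qed

lemma ratio_tendsto_of_odds_tendsto: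
  assumes d: "\<And>K. d K \<le> K" and d_inf: "filterlim d at_top sequentially"
    and odds: "(\<lambda>K. real (K - d K) / real (d K)) \<longlonglongrightarrow> r" and r: "1 + r \<noteq> 0"
  shows "(\<lambda>K. real (d K) / real K) \<longlonglongrightarrow> 1 / (1 + r)"
proof -
  have "(\<lambda>K. 1 / (1 + real (K - d K) / real (d K))) \<longlonglongrightarrow> 1 / (1 + r)"
    using r by (intro tendsto_intros odds) auto
  moreover have "eventually (\<lambda>K. 1 / (1 + real (K - d K) / real (d K)) = real (d K) / real K) sequentially"
    using d_inf[unfolded filterlim_at_top, rule_format, of 1]
  proof eventually_elim
    case (elim K)
    then show ?case
      using d[of K] by (simp add: of_nat_diff field_simps)
  qed
  ultimately show ?thesis
    by (rule Lim_transform_eventually)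
qed

lemma sampling_conditions_alt:
  fixes d1 :: "nat \<Rightarrow> nat"
  assumes cont: "continuous (at (1 / (1 + r), 0, 0))
      (\<lambda>z. delta_scaled a m l (fst z) (fst (snd z)) (snd (snd z)))"
    and r: "1 + r \<noteq> 0" and d: "\<forall>K. d1 K \<le> K" and d_inf: "filterlim d1 at_top sequentially"
    and odds: "(\<lambda>K. real (K - d1 K) / real (d1 K)) \<longlonglongrightarrow> r"
  shows "(\<lambda>K. measure_pmf.variance (S_dist K (d1 K))
        (\<lambda>T. block_var (equicorr_mat K (1 / K)) (pi_alt a m K) T)) \<longlonglongrightarrow> 0"
    and "(\<lambda>K. measure_pmf.variance (S_dist K (d1 K))
        (\<lambda>T. block_var (equicorr_mat K (1 / K)) (pi_alt a m K) ({..<K} - T))) \<longlonglongrightarrow> 0"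
    and "e > 0 \<Longrightarrow> (\<lambda>K. measure_pmf.prob (S_dist K (d1 K))
        {T. \<bar>delta_resid (equicorr_mat K (1 / K)) (pi_alt a m K) (gamma_alt l K) T
          - delta_scaled a m l (1 / (1 + r)) 0 0\<bar> > e}) \<longlonglongrightarrow> 0"
proof -
  have dK: "d1 K \<le> K" for K
    using d by blast
  show "(\<lambda>K. measure_pmf.variance (S_dist K (d1 K))
        (\<lambda>T. block_var (equicorr_mat K (1 / K)) (pi_alt a m K) T)) \<longlonglongrightarrow> 0"
    and "(\<lambda>K. measure_pmf.variance (S_dist K (d1 K))
        (\<lambda>T. block_var (equicorr_mat K (1 / K)) (pi_alt a m K) ({..<K} - T))) \<longlonglongrightarrow> 0"
    by (rule variance_block_var_alt_tendsto_zero[OF dK])+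
  have "(\<lambda>K. real (d1 K) / real K) \<longlonglongrightarrow> 1 / (1 + r)"
    by (rule ratio_tendsto_of_odds_tendsto[OF dK d_inf odds r])
  then show "e > 0 \<Longrightarrow> (\<lambda>K. measure_pmf.prob (S_dist K (d1 K))
      {T. \<bar>delta_resid (equicorr_mat K (1 / K)) (pi_alt a m K) (gamma_alt l K) T
        - delta_scaled a m l (1 / (1 + r)) 0 0\<bar> > e}) \<longlonglongrightarrow> 0"
    by (rule delta_resid_alt_tendsto_in_prob[OF cont dK])
qed

theorem mainTheorem7:
  fixes r C :: real
  assumes "r > 0"
  shows "\<exists>(Sig :: nat \<Rightarrow> real mat) (p :: nat \<Rightarrow> real vec) (g :: nat \<Rightarrow> real vec).
    (\<forall>K. pos_def_mat (Sig K) K \<and> p K \<in> carrier_vec K \<and> g K \<in> carrier_vec K) \<and>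
    (\<exists>eps M. 0 < eps \<and> eps \<le> M \<and>
       (\<forall>K\<ge>1. eps \<le> p K \<bullet> (Sig K *\<^sub>v p K) \<and> p K \<bullet> (Sig K *\<^sub>v p K) \<le> M)) \<and>
    convergent (\<lambda>K. (\<Sum>i<K. (p K $ i)\<^sup>2 * Sig K $$ (i, i)) / (p K \<bullet> (Sig K *\<^sub>v p K))) \<and>
    (\<forall>d1 :: nat \<Rightarrow> nat.
       (\<forall>K. d1 K \<le> K) \<and> filterlim d1 at_top sequentially \<and>
       (\<lambda>K. real (K - d1 K) / real (d1 K)) \<longlonglongrightarrow> r
       \<longrightarrow>
       (\<lambda>K. measure_pmf.variance (S_dist K (d1 K)) (\<lambda>T. block_var (Sig K) (p K) T)) \<longlonglongrightarrow> 0 \<and>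
       (\<lambda>K. measure_pmf.variance (S_dist K (d1 K)) (\<lambda>T. block_var (Sig K) (p K) ({..<K} - T))) \<longlonglongrightarrow> 0 \<and>
       (\<forall>e>0. (\<lambda>K. measure_pmf.prob (S_dist K (d1 K))
                 {T. \<bar>delta_resid (Sig K) (p K) (g K) T - C\<bar> > e}) \<longlonglongrightarrow> 0))"
proof -
  have x0: "0 < 1 / (1 + r)" "1 / (1 + r) < 1"
    using assms by simp_all
  obtain a m l where am: "a + m \<noteq> 0" and C: "delta_scaled a m l (1 / (1 + r)) 0 0 = C"
    and cont: "continuous (at (1 / (1 + r), 0, 0))
      (\<lambda>z. delta_scaled a m l (fst z) (fst (snd z)) (snd (snd z)))"
    using exists_params_delta_scaled[OF x0] by blast
  have pos_def: "pos_def_mat (equicorr_mat K (1 / real K)) K" for K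
    by (rule equicorr_pos_def) simp
  have "1 + r \<noteq> 0"
    using assms by simp
  note sampling = sampling_conditions_alt[OF cont this, unfolded C]
  show ?thesis
    by (rule exI[of _ "\<lambda>K. equicorr_mat K (1 / real K)"], rule exI[of _ "pi_alt a m"],
        rule exI[of _ "gamma_alt l"])
      (use pos_def quadratic_form_pi_alt_bounds[OF am] convergent_diagonal_share_pi_alt[OF am]
        sampling in auto)
qed

end
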